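(* Let $\mathcal{A}$ be an abelian von Neumann algebra with Gelfand spectrum $\Omega$, and let $\beta:\Omega\to\mathcal{Q}(\mathcal{A})$, $\beta(\tau)=\{P\in\mathcal{P}(\mathcal{A}) : \tau(P)=1\}$, be the homeomorphism of the Gelfand spectrum onto the Stone spectrum. Then for every $A\in\mathcal{A}_{sa}$ and every $\tau\in\Omega$, $f_A(\beta(\tau))=\tau(A)$; i.e. up to $\beta$, the map $A\mapsto f_A$ from $\mathcal{A}_{sa}$ onto $C(\mathcal{Q}(\mathcal{A}),\mathbb{R})$ is the restriction of the Gelfand transformation to $\mathcal{A}_{sa}$.
   Context: $\Omega$ is the set of nonzero multiplicative positive linear functionals on $\mathcal{A}$ with the weak*-topology. $\mathcal{P}(\mathcal{A})$ is the lattice of projections of $\mathcal{A}$. A quasipoint of $\mathcal{P}(\mathcal{A})$ is a maximal subset $\mathfrak{B}$ with $0\notin\mathfrak{B}$ such that for all $P,Q\in\mathfrak{B}$ there is $R\in\mathfrak{B}$ with $R\le P\wedge Q$; $\mathcal{Q}(\mathcal{A})$ is the set of quasipoints with the topology generated by the basis $\{\mathfrak{B}: P\in\mathfrak{B}\}$, $P\in\mathcal{P}(\mathcal{A})$. For $A\in\mathcal{A}_{sa}$ with right-continuous spectral family $(E^A_\lambda)$, $f_A(\mathfrak{B}):=\inf\{\lambda : E^A_\lambda\in\mathfrak{B}\}$. *)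

theory Defs
  imports Complex_Main
begin

text \<open>Inner product is conjugate-linear in the first and linear in the second argument.\<close>

class complex_hilbert = ab_group_add +
  fixes scaleC :: "complex \<Rightarrow> 'a \<Rightarrow> 'a" (infixr "*\<^sub>C" 75)
  fixes cinner :: "'a \<Rightarrow> 'a \<Rightarrow> complex"
  assumes scaleC_add_right: "a *\<^sub>C (x + y) = a *\<^sub>C x + a *\<^sub>C y"
    and scaleC_add_left: "(a + b) *\<^sub>C x = a *\<^sub>C x + b *\<^sub>C x"
    and scaleC_scaleC: "a *\<^sub>C (b *\<^sub>C x) = (a * b) *\<^sub>C x"
    and scaleC_one: "1 *\<^sub>C x = x"
    and cinner_conj: "cinner x y = cnj (cinner y x)"
    and cinner_add_right: "cinner x (y + z) = cinner x y + cinner x z"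
    and cinner_scaleC_right: "cinner x (a *\<^sub>C y) = a * cinner x y"
    and cinner_pos: "x \<noteq> 0 \<Longrightarrow> 0 < Re (cinner x x)"
    and complete:
      "(\<And>e. e > 0 \<Longrightarrow> \<exists>N::nat. \<forall>m\<ge>N. \<forall>n\<ge>N.
            sqrt (Re (cinner (X m - X n) (X m - X n))) < e) \<Longrightarrow>
       \<exists>L. \<forall>e>0. \<exists>N::nat. \<forall>n\<ge>N. sqrt (Re (cinner (X n - L) (X n - L))) < e"

definition hnorm :: "'h::complex_hilbert \<Rightarrow> real" where
  "hnorm x = sqrt (Re (cinner x x))"

definition bounded_op :: "('h::complex_hilbert \<Rightarrow> 'h) \<Rightarrow> bool" where
  "bounded_op T \<longleftrightarrow> (\<forall>x y. T (x + y) = T x + T y) \<and> (\<forall>a x. T (a *\<^sub>C x) = a *\<^sub>C T x)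
      \<and> (\<exists>K. \<forall>x. hnorm (T x) \<le> K * hnorm x)"

definition bops :: "('h::complex_hilbert \<Rightarrow> 'h) set" where
  "bops = {T. bounded_op T}"

definition adj :: "('h::complex_hilbert \<Rightarrow> 'h) \<Rightarrow> ('h \<Rightarrow> 'h)" where
  "adj T = (THE S. \<forall>x y. cinner (T x) y = cinner x (S y))"

definition commutant :: "('h::complex_hilbert \<Rightarrow> 'h) set \<Rightarrow> ('h \<Rightarrow> 'h) set" where
  "commutant S = {T \<in> bops. \<forall>A\<in>S. T \<circ> A = A \<circ> T}"

definition op_le :: "('h::complex_hilbert \<Rightarrow> 'h) \<Rightarrow> ('h \<Rightarrow> 'h) \<Rightarrow> bool" where
  "op_le S T \<longleftrightarrow> (\<forall>x. cinner x (T x - S x) \<in> \<real> \<and> 0 \<le> Re (cinner x (T x - S x)))"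

definition zero_op :: "'h::complex_hilbert \<Rightarrow> 'h" where
  "zero_op = (\<lambda>x. 0)"

text \<open>A von Neumann algebra: a self-adjoint set of bounded operators equal to its
  bicommutant (equivalently, by the bicommutant theorem, a weakly closed unital *-subalgebra).\<close>
definition von_neumann_algebra :: "('h::complex_hilbert \<Rightarrow> 'h) set \<Rightarrow> bool" where
  "von_neumann_algebra M \<longleftrightarrow> M \<subseteq> bops \<and> (\<forall>A\<in>M. adj A \<in> M)
      \<and> commutant (commutant M) = M"

definition abelian :: "('h::complex_hilbert \<Rightarrow> 'h) set \<Rightarrow> bool" where
  "abelian M \<longleftrightarrow> (\<forall>A\<in>M. \<forall>B\<in>M. A \<circ> B = B \<circ> A)"

definition self_adjoints :: "('h::complex_hilbert \<Rightarrow> 'h) set \<Rightarrow> ('h \<Rightarrow> 'h) set" where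
  "self_adjoints M = {A \<in> M. adj A = A}"

definition projections :: "('h::complex_hilbert \<Rightarrow> 'h) set \<Rightarrow> ('h \<Rightarrow> 'h) set" where
  "projections M = {P \<in> M. P \<circ> P = P \<and> adj P = P}"

definition gelfand_spectrum :: "('h::complex_hilbert \<Rightarrow> 'h) set \<Rightarrow> (('h \<Rightarrow> 'h) \<Rightarrow> complex) set" where
  "gelfand_spectrum M = {\<tau>.
     (\<forall>A\<in>M. \<forall>B\<in>M. \<tau> (\<lambda>x. A x + B x) = \<tau> A + \<tau> B)
   \<and> (\<forall>A\<in>M. \<forall>a. \<tau> (\<lambda>x. a *\<^sub>C A x) = a * \<tau> A)
   \<and> (\<forall>A\<in>M. \<forall>B\<in>M. \<tau> (A \<circ> B) = \<tau> A * \<tau> B)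
   \<and> (\<forall>A\<in>M. op_le zero_op A \<longrightarrow> \<tau> A \<in> \<real> \<and> 0 \<le> Re (\<tau> A))
   \<and> (\<exists>A\<in>M. \<tau> A \<noteq> 0)}"

definition filter_base :: "('h::complex_hilbert \<Rightarrow> 'h) set \<Rightarrow> ('h \<Rightarrow> 'h) set \<Rightarrow> bool" where
  "filter_base M B \<longleftrightarrow> B \<subseteq> projections M \<and> zero_op \<notin> B
     \<and> (\<forall>P\<in>B. \<forall>Q\<in>B. \<exists>R\<in>B. op_le R P \<and> op_le R Q)"

definition quasipoints :: "('h::complex_hilbert \<Rightarrow> 'h) set \<Rightarrow> ('h \<Rightarrow> 'h) set set" where
  "quasipoints M = {B. filter_base M B \<and> (\<forall>C. filter_base M C \<and> B \<subseteq> C \<longrightarrow> C = B)}"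

definition beta :: "('h::complex_hilbert \<Rightarrow> 'h) set \<Rightarrow> (('h \<Rightarrow> 'h) \<Rightarrow> complex) \<Rightarrow> ('h \<Rightarrow> 'h) set" where
  "beta M \<tau> = {P \<in> projections M. \<tau> P = 1}"

text \<open>Right-continuous spectral family: the greatest projection P of M with AP \<le> \<lambda>P.\<close>
definition spectral_proj :: "('h::complex_hilbert \<Rightarrow> 'h) set \<Rightarrow> ('h \<Rightarrow> 'h) \<Rightarrow> real \<Rightarrow> ('h \<Rightarrow> 'h)" where
  "spectral_proj M A l = (THE P. P \<in> projections M
       \<and> op_le (A \<circ> P) (\<lambda>x. complex_of_real l *\<^sub>C P x)
       \<and> (\<forall>Q\<in>projections M. op_le (A \<circ> Q) (\<lambda>x. complex_of_real l *\<^sub>C Q x) \<longrightarrow> op_le Q P))"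

definition obs_fun :: "('h::complex_hilbert \<Rightarrow> 'h) set \<Rightarrow> ('h \<Rightarrow> 'h) \<Rightarrow> ('h \<Rightarrow> 'h) set \<Rightarrow> real" where
  "obs_fun M A B = Inf {l. spectral_proj M A l \<in> B}"

end

theory Submission
  imports Defs "HOL-Computational_Algebra.Polynomial"
begin

text \<open>
  Let \<open>\<tau>\<close> be a character and \<open>E\<^sub>\<lambda>\<close> the spectral projections of the self-adjoint \<open>A\<close>.
  Each \<open>E\<^sub>\<lambda>\<close> is idempotent, so \<open>\<tau>(E\<^sub>\<lambda>) \<in> {0, 1}\<close>. If \<open>\<tau>(E\<^sub>\<lambda>) = 1\<close>, applying \<open>\<tau>\<close> to
  the positive operator \<open>\<lambda>E\<^sub>\<lambda> - AE\<^sub>\<lambda>\<close> gives \<open>\<tau>(A) \<le> \<lambda>\<close>. Conversely, \<open>E\<^sub>\<lambda>\<close> is the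
  projection onto the kernel of the positive part \<open>P\<close> of \<open>A - \<lambda>\<close>, and
  \<open>P = (A - \<lambda>)(I - E\<^sub>\<lambda>)\<close>; so \<open>\<tau>(E\<^sub>\<lambda>) = 0\<close> forces \<open>0 \<le> \<tau>(P) = \<tau>(A) - \<lambda>\<close>.
  Thus \<open>{\<lambda>. E\<^sub>\<lambda> \<in> \<beta>(\<tau>)}\<close> lies between \<open>(\<tau>(A), \<infinity>)\<close> and \<open>[\<tau>(A), \<infinity>)\<close>, and its
  infimum is \<open>\<tau>(A)\<close>.

  Square roots and kernel projections are strong limits of monotone sequences of
  operators: square roots via the iteration \<open>p\<^sub>n\<^sub>+\<^sub>1 = (t + p\<^sub>n\<^sup>2)/2\<close>, kernel
  projections via the powers of \<open>I - Y\<^sup>2/\<parallel>Y\<parallel>\<^sup>2\<close>; positive parts then come from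
  \<open>|B| = sqrt (B\<^sup>2)\<close>. The bicommutant property keeps all these limits in the algebra.
  The Riesz representation is needed only to read \<open>adj A = A\<close> as
  \<open>\<langle>A x, y\<rangle> = \<langle>x, A y\<rangle>\<close>.
\<close>

lemma scaleC_zero_left [simp]: "(0::complex) *\<^sub>C (x::'h::complex_hilbert) = 0"
proof -
  have "(0 + 0) *\<^sub>C x = 0 *\<^sub>C x + 0 *\<^sub>C x" by (rule scaleC_add_left)
  then show ?thesis by simp
qed

lemma scaleC_zero_right [simp]: "a *\<^sub>C (0::'h::complex_hilbert) = 0"
proof -
  have "a *\<^sub>C (0 + 0) = a *\<^sub>C (0::'h) + a *\<^sub>C 0" by (rule scaleC_add_right)
  then show ?thesis by simp
qed

lemma scaleC_minus_left: "(- a) *\<^sub>C (x::'h::complex_hilbert) = - (a *\<^sub>C x)"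
  using scaleC_add_left[of a "- a" x] minus_unique[of "a *\<^sub>C x" "(- a) *\<^sub>C x"] by simp

lemma scaleC_minus_right: "a *\<^sub>C (- x::'h::complex_hilbert) = - (a *\<^sub>C x)"
  using scaleC_add_right[of a x "- x"] minus_unique[of "a *\<^sub>C x" "a *\<^sub>C (- x)"] by simp

lemma scaleC_diff_right: "a *\<^sub>C (x - y::'h::complex_hilbert) = a *\<^sub>C x - a *\<^sub>C y"
  unfolding diff_conv_add_uminus by (simp only: scaleC_add_right scaleC_minus_right)

lemma scaleC_minus_one: "(- 1) *\<^sub>C (x::'h::complex_hilbert) = - x"
  by (simp add: scaleC_minus_left scaleC_one)

lemma scaleC_eq_0_iff [simp]: "a *\<^sub>C x = 0 \<longleftrightarrow> a = 0 \<or> x = (0::'h::complex_hilbert)"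
proof
  assume "a *\<^sub>C x = 0"
  then have "(1 / a) *\<^sub>C (a *\<^sub>C x) = 0" by simp
  then show "a = 0 \<or> x = 0" by (cases "a = 0") (simp_all add: scaleC_scaleC scaleC_one)
qed auto

lemma scaleC_half_add_half: "(1/2::complex) *\<^sub>C x + (1/2) *\<^sub>C x = (x::'h::complex_hilbert)"
  by (simp add: scaleC_one flip: scaleC_add_left)

lemma cinner_add_left: "cinner (x + y) (z::'h::complex_hilbert) = cinner x z + cinner y z"
  by (metis cinner_conj cinner_add_right complex_cnj_add)

lemma cinner_scaleC_left: "cinner (a *\<^sub>C x) (y::'h::complex_hilbert) = cnj a * cinner x y"
  by (metis cinner_conj cinner_scaleC_right complex_cnj_mult)

lemma cinner_zero_right [simp]: "cinner x (0::'h::complex_hilbert) = 0"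
  using cinner_scaleC_right[of x 0 0] by simp

lemma cinner_zero_left [simp]: "cinner (0::'h::complex_hilbert) x = 0"
  using cinner_scaleC_left[of 0 0 x] by simp

lemma cinner_minus_right: "cinner x (- y::'h::complex_hilbert) = - cinner x y"
  using cinner_scaleC_right[of x "- 1" y] by (simp add: scaleC_minus_one)

lemma cinner_minus_left: "cinner (- x::'h::complex_hilbert) y = - cinner x y"
  using cinner_scaleC_left[of "- 1" x y] by (simp add: scaleC_minus_one)

lemma cinner_diff_right: "cinner x (y - z::'h::complex_hilbert) = cinner x y - cinner x z"
  unfolding diff_conv_add_uminus by (simp only: cinner_add_right cinner_minus_right)

lemma cinner_diff_left: "cinner (x - y::'h::complex_hilbert) z = cinner x z - cinner y z"
  unfolding diff_conv_add_uminus by (simp only: cinner_add_left cinner_minus_left)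

lemma cinner_sum_right: "cinner x (\<Sum>k\<in>S. f k) = (\<Sum>k\<in>S. cinner x (f k :: 'h::complex_hilbert))"
  by (induction S rule: infinite_finite_induct) (simp_all add: cinner_add_right)

lemma cinner_sum_left: "cinner (\<Sum>k\<in>S. f k) x = (\<Sum>k\<in>S. cinner (f k :: 'h::complex_hilbert) x)"
  by (induction S rule: infinite_finite_induct) (simp_all add: cinner_add_left)

lemma scaleC_sum_right: "c *\<^sub>C (\<Sum>k\<in>S. f k) = (\<Sum>k\<in>S. c *\<^sub>C (f k :: 'h::complex_hilbert))"
  by (induction S rule: infinite_finite_induct) (simp_all add: scaleC_add_right)

lemma cinner_self_real: "cinner x (x::'h::complex_hilbert) = complex_of_real (Re (cinner x x))"
proof -
  have "Im (cinner x x) = 0"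
    using cinner_conj[of x x] by (metis cnj.simps(2) complex.expand cnj.sel(1) neg_equal_zero)
  then show ?thesis by (simp add: complex_eq_iff)
qed

lemma cinner_self_nonneg: "0 \<le> Re (cinner x (x::'h::complex_hilbert))"
proof (cases "x = 0")
  case False
  then show ?thesis using cinner_pos[of x] by simp
qed simp

lemma cinner_self_eq_zero [simp]: "cinner x x = 0 \<longleftrightarrow> x = (0::'h::complex_hilbert)"
  using cinner_pos[of x] by (cases "x = 0") auto

lemma cinner_eqI: "(\<And>y. cinner y a = cinner y b) \<Longrightarrow> a = (b::'h::complex_hilbert)"
  by (metis cinner_diff_right cinner_self_eq_zero eq_iff_diff_eq_0)

lemma hnorm_nonneg [simp]: "0 \<le> hnorm x"
  by (simp add: hnorm_def cinner_self_nonneg)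

lemma hnorm_sq: "(hnorm x)\<^sup>2 = Re (cinner x (x::'h::complex_hilbert))"
  by (simp add: hnorm_def cinner_self_nonneg)

lemma cinner_self_hnorm: "cinner x (x::'h::complex_hilbert) = complex_of_real ((hnorm x)\<^sup>2)"
  by (metis cinner_self_real hnorm_sq)

lemma hnorm_eq_zero [simp]: "hnorm x = 0 \<longleftrightarrow> x = (0::'h::complex_hilbert)"
proof -
  have "hnorm x = 0 \<longleftrightarrow> (hnorm x)\<^sup>2 = 0" by simp
  also have "\<dots> \<longleftrightarrow> cinner x x = 0" by (simp add: cinner_self_hnorm)
  finally show ?thesis by simp
qed

lemma hnorm_zero [simp]: "hnorm (0::'h::complex_hilbert) = 0"
  by simp

lemma hnorm_scaleC: "hnorm (a *\<^sub>C x) = cmod a * hnorm (x::'h::complex_hilbert)"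
proof -
  have "cinner (a *\<^sub>C x) (a *\<^sub>C x) = (cnj a * a) * cinner x x"
    by (simp add: cinner_scaleC_left cinner_scaleC_right)
  also have "cnj a * a = complex_of_real ((cmod a)\<^sup>2)"
    by (metis complex_norm_square mult.commute)
  finally have "Re (cinner (a *\<^sub>C x) (a *\<^sub>C x)) = (cmod a)\<^sup>2 * Re (cinner x x)"
    by (metis Re_complex_of_real cinner_self_real of_real_mult)
  then show ?thesis
    unfolding hnorm_def by (simp add: real_sqrt_mult)
qed

lemma hnorm_minus_commute: "hnorm (x - y) = hnorm (y - x::'h::complex_hilbert)"
  using hnorm_scaleC[of "- 1" "x - y"] by (simp add: scaleC_minus_one)

lemma hermitian_form_cauchy_schwarz:
  fixes s :: "'h::complex_hilbert \<Rightarrow> 'h \<Rightarrow> complex"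
  assumes add_l: "\<And>x y z. s (x + y) z = s x z + s y z"
    and add_r: "\<And>x y z. s x (y + z) = s x y + s x z"
    and sc_l: "\<And>a x y. s (a *\<^sub>C x) y = cnj a * s x y"
    and sc_r: "\<And>a x y. s x (a *\<^sub>C y) = a * s x y"
    and herm: "\<And>x y. s y x = cnj (s x y)"
    and nonneg: "\<And>x. s x x \<in> \<real> \<and> 0 \<le> Re (s x x)"
  shows "(cmod (s x y))\<^sup>2 \<le> Re (s x x) * Re (s y y)"
proof -
  define w where "w = s x y"
  define a where "a = Re (s x x)"
  define c where "c = Re (s y y)"
  have sxx: "s x x = complex_of_real a" and syy: "s y y = complex_of_real c"
    using nonneg[of x] nonneg[of y] by (simp_all add: a_def c_def complex_is_Real_iff complex_eq_iff)
  have a0: "0 \<le> a" and c0: "0 \<le> c" using nonneg by (auto simp: a_def c_def)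
  text \<open>Expand \<open>s(x + t y, x + t y) \<ge> 0\<close> along \<open>t = -r cnj w\<close> for real \<open>r\<close>.\<close>
  have key: "0 \<le> a - 2 * r * (cmod w)\<^sup>2 + r\<^sup>2 * (cmod w)\<^sup>2 * c" for r :: real
  proof -
    define t where "t = - complex_of_real r * cnj w"
    have "s (x + t *\<^sub>C y) (x + t *\<^sub>C y) = s x x + t * s x y + cnj t * s y x + cnj t * t * s y y"
      by (simp add: add_l add_r sc_l sc_r algebra_simps)
    also have "\<dots> = complex_of_real (a - 2 * r * (cmod w)\<^sup>2 + r\<^sup>2 * (cmod w)\<^sup>2 * c)"
    proof -
      have "s y x = cnj w" unfolding w_def by (rule herm)
      moreover have "cmod w * cmod w = Re w * Re w + Im w * Im w"
        using cmod_power2[of w] by (simp add: power2_eq_square)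
      ultimately show ?thesis unfolding t_def sxx syy w_def[symmetric]
        by (simp add: complex_eq_iff algebra_simps power2_eq_square)
    qed
    finally show ?thesis using nonneg[of "x + t *\<^sub>C y"] by (metis Re_complex_of_real)
  qed
  show ?thesis
  proof (cases "c = 0")
    case True
    have "(cmod w)\<^sup>2 \<le> 0"
    proof (rule ccontr)
      assume "\<not> (cmod w)\<^sup>2 \<le> 0"
      moreover have "0 \<le> a - 2 * ((a + 1) / (cmod w)\<^sup>2) * (cmod w)\<^sup>2"
        using key[of "(a + 1) / (cmod w)\<^sup>2"] True by simp
      ultimately show False using a0 by simp
    qed
    then show ?thesis using True a0 by (simp add: w_def c_def)
  next
    case False
    then have "c > 0" using c0 by simp
    then have "0 \<le> a - (cmod w)\<^sup>2 / c"
      using key[of "1 / c"] by (simp add: power2_eq_square field_simps)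
    then show ?thesis using \<open>c > 0\<close> by (simp add: field_simps w_def a_def c_def)
  qed
qed

lemma cauchy_schwarz: "cmod (cinner x y) \<le> hnorm x * hnorm (y::'h::complex_hilbert)"
proof -
  have "(cmod (cinner x y))\<^sup>2 \<le> Re (cinner x x) * Re (cinner y y)"
  proof (rule hermitian_form_cauchy_schwarz[where s = cinner])
    show "cinner x x \<in> \<real> \<and> 0 \<le> Re (cinner x x)" for x :: 'h
      by (metis Reals_of_real cinner_self_nonneg cinner_self_real)
  qed (simp_all add: cinner_add_left cinner_add_right cinner_scaleC_left cinner_scaleC_right
      flip: cinner_conj)
  also have "\<dots> = (hnorm x * hnorm y)\<^sup>2" by (simp add: hnorm_sq power_mult_distrib)
  finally show ?thesis by (rule power2_le_imp_le) simp
qed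

lemma Re_cinner_le: "Re (cinner x y) \<le> hnorm x * hnorm (y::'h::complex_hilbert)"
  using cauchy_schwarz[of x y] complex_Re_le_cmod order_trans by blast

lemma hnorm_triangle: "hnorm (x + y) \<le> hnorm x + hnorm (y::'h::complex_hilbert)"
proof -
  have "Re (cinner (x + y) (x + y)) = Re (cinner x x) + Re (cinner y y) + Re (cinner x y) + Re (cinner y x)"
    by (simp add: cinner_add_left cinner_add_right)
  also have "\<dots> \<le> (hnorm x)\<^sup>2 + (hnorm y)\<^sup>2 + hnorm x * hnorm y + hnorm y * hnorm x"
    using Re_cinner_le[of x y] Re_cinner_le[of y x] by (simp add: hnorm_sq mult.commute)
  also have "\<dots> = (hnorm x + hnorm y)\<^sup>2" by (simp add: power2_eq_square algebra_simps)
  finally have "(hnorm (x + y))\<^sup>2 \<le> (hnorm x + hnorm y)\<^sup>2" by (simp add: hnorm_sq)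
  then show ?thesis by (rule power2_le_imp_le) simp
qed

lemma hnorm_diff_abs: "\<bar>hnorm x - hnorm y\<bar> \<le> hnorm (x - (y::'h::complex_hilbert))"
  using hnorm_triangle[of "x - y" y] hnorm_triangle[of "y - x" x] hnorm_minus_commute[of x y] by simp

lemma parallelogram_law:
  "(hnorm (x - y))\<^sup>2 + (hnorm (x + y))\<^sup>2 = 2 * (hnorm x)\<^sup>2 + 2 * (hnorm (y::'h::complex_hilbert))\<^sup>2"
  unfolding hnorm_sq by (simp add: cinner_add_left cinner_add_right cinner_diff_left cinner_diff_right)

lemma hnorm_add_scaleC_sq:
  "(hnorm (x + t *\<^sub>C k))\<^sup>2 = (hnorm x)\<^sup>2 + 2 * Re (t * cinner x k) + (cmod t)\<^sup>2 * (hnorm (k::'h::complex_hilbert))\<^sup>2"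
proof -
  have e: "cinner (x + t *\<^sub>C k) (x + t *\<^sub>C k)
      = cinner x x + t * cinner x k + cnj t * cinner k x + (cnj t * t) * cinner k k"
    by (simp add: cinner_add_left cinner_add_right cinner_scaleC_left cinner_scaleC_right algebra_simps)
  have "Re (cnj t * cinner k x) = Re (t * cinner x k)"
    by (metis cinner_conj complex_cnj_mult cnj.sel(1))
  moreover have "cnj t * t = complex_of_real ((cmod t)\<^sup>2)"
    by (metis complex_norm_square mult.commute)
  ultimately show ?thesis
    unfolding hnorm_sq e by (simp add: cinner_self_hnorm del: of_real_power)
qed

section \<open>Strong convergence\<close>

definition hlim :: "(nat \<Rightarrow> 'h::complex_hilbert) \<Rightarrow> 'h \<Rightarrow> bool" where
  "hlim X L \<longleftrightarrow> (\<lambda>n. hnorm (X n - L)) \<longlonglongrightarrow> 0"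

lemma hlim_const: "hlim (\<lambda>n. c) c"
  by (simp add: hlim_def)

lemma hlim_squeeze:
  assumes "\<And>n. hnorm (X n - L) \<le> f n" "f \<longlonglongrightarrow> 0"
  shows "hlim X L"
  unfolding hlim_def by (rule tendsto_sandwich[of "\<lambda>n. 0" _ _ f]) (use assms in auto)

lemma hlim_unique:
  assumes "hlim X a" "hlim X b" shows "a = b"
proof -
  have "hnorm (a - b) \<le> hnorm (X n - a) + hnorm (X n - b)" for n
    using hnorm_triangle[of "a - X n" "X n - b"] hnorm_minus_commute[of a "X n"] by simp
  moreover have "(\<lambda>n. hnorm (X n - a) + hnorm (X n - b)) \<longlonglongrightarrow> 0 + 0"
    using assms unfolding hlim_def by (rule tendsto_add)
  ultimately have "hnorm (a - b) \<le> 0"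
    by (intro tendsto_lowerbound[of "\<lambda>n. hnorm (X n - a) + hnorm (X n - b)"])
      (auto intro: always_eventually)
  then show ?thesis using hnorm_nonneg[of "a - b"] by simp
qed

lemma hlim_add:
  assumes "hlim X a" "hlim Y b" shows "hlim (\<lambda>n. X n + Y n) (a + b)"
proof (rule hlim_squeeze)
  show "hnorm (X n + Y n - (a + b)) \<le> hnorm (X n - a) + hnorm (Y n - b)" for n
    using hnorm_triangle[of "X n - a" "Y n - b"] by (simp add: algebra_simps)
  show "(\<lambda>n. hnorm (X n - a) + hnorm (Y n - b)) \<longlonglongrightarrow> 0"
    using tendsto_add[OF assms[unfolded hlim_def]] by simp
qed

lemma hlim_scaleC:
  assumes "hlim X a" shows "hlim (\<lambda>n. c *\<^sub>C X n) (c *\<^sub>C a)"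
proof -
  have "(\<lambda>n. cmod c * hnorm (X n - a)) \<longlonglongrightarrow> 0"
    using assms unfolding hlim_def by (rule tendsto_mult_right_zero)
  then show ?thesis unfolding hlim_def
    by (simp add: scaleC_diff_right[symmetric] hnorm_scaleC)
qed

lemma hlim_Suc:
  assumes "hlim X a" shows "hlim (\<lambda>n. X (Suc n)) a"
  using assms unfolding hlim_def by (rule LIMSEQ_Suc)

lemma hlim_cinner_right:
  assumes "hlim X a" shows "(\<lambda>n. cinner y (X n)) \<longlonglongrightarrow> cinner y a"
proof -
  have le: "cmod (cinner y (X n) - cinner y a) \<le> hnorm y * hnorm (X n - a)" for n
    using cauchy_schwarz[of y "X n - a"] by (simp add: cinner_diff_right)
  have "(\<lambda>n. hnorm y * hnorm (X n - a)) \<longlonglongrightarrow> 0"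
    using assms unfolding hlim_def by (rule tendsto_mult_right_zero)
  then have "(\<lambda>n. cmod (cinner y (X n) - cinner y a)) \<longlonglongrightarrow> 0"
    by (rule tendsto_sandwich[of "\<lambda>n. 0", rotated 3]) (use le in auto)
  then show ?thesis
    by (simp add: tendsto_iff dist_norm LIMSEQ_iff)
qed

lemma hlim_cinner_left:
  assumes "hlim X a" shows "(\<lambda>n. cinner (X n) y) \<longlonglongrightarrow> cinner a y"
proof -
  have "(\<lambda>n. cnj (cinner y (X n))) \<longlonglongrightarrow> cnj (cinner y a)"
    using hlim_cinner_right[OF assms] by (rule tendsto_cnj)
  then show ?thesis by (metis (no_types, lifting) ext cinner_conj)
qed

lemma hlim_hnorm:
  assumes "hlim X a" shows "(\<lambda>n. hnorm (X n)) \<longlonglongrightarrow> hnorm a"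
proof -
  have "(\<lambda>n. \<bar>hnorm (X n) - hnorm a\<bar>) \<longlonglongrightarrow> 0"
    using assms unfolding hlim_def
    by (rule tendsto_sandwich[of "\<lambda>n. 0", rotated 3]) (auto simp: hnorm_diff_abs)
  then show ?thesis
    by (simp add: LIMSEQ_iff)
qed

lemma hlim_Cauchy:
  assumes "\<And>e. e > 0 \<Longrightarrow> \<exists>N. \<forall>m\<ge>N. \<forall>n\<ge>N. hnorm (X m - X n) < e"
  obtains L where "hlim X L"
proof -
  obtain L where "\<forall>e>0. \<exists>N::nat. \<forall>n\<ge>N. sqrt (Re (cinner (X n - L) (X n - L))) < e"
    using complete[of X] assms unfolding hnorm_def by blast
  then have "hlim X L" unfolding hlim_def LIMSEQ_iff by (simp add: hnorm_def cinner_self_nonneg)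
  then show ?thesis by (rule that)
qed

lemma hlim_if_sq_dist_le:
  fixes \<delta> :: "nat \<Rightarrow> real"
  assumes dist: "\<And>m n. n \<le> m \<Longrightarrow> (hnorm (X m - X n))\<^sup>2 \<le> \<delta> n" and "\<delta> \<longlonglongrightarrow> 0"
  obtains l where "hlim X l"
proof -
  have "\<exists>N. \<forall>m\<ge>N. \<forall>n\<ge>N. hnorm (X m - X n) < e" if "e > 0" for e
  proof -
    obtain N where N: "\<forall>n\<ge>N. norm (\<delta> n - 0) < e\<^sup>2"
      using LIMSEQ_D[OF \<open>\<delta> \<longlonglongrightarrow> 0\<close>] \<open>e > 0\<close> by (meson zero_less_power)
    have "hnorm (X m - X n) < e" if "n \<le> m" "n \<ge> N" for m n
    proof -
      have "(hnorm (X m - X n))\<^sup>2 < e\<^sup>2" using dist[OF \<open>n \<le> m\<close>] N \<open>n \<ge> N\<close> by force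
      then show ?thesis using \<open>e > 0\<close> by (simp add: power_less_imp_less_base)
    qed
    then show ?thesis by (metis hnorm_minus_commute nle_le)
  qed
  then obtain l where "hlim X l" by (rule hlim_Cauchy)
  then show ?thesis by (rule that)
qed

lemma bounded_opD:
  assumes "bounded_op T"
  shows "T (x + y) = T x + T y" "T (a *\<^sub>C x) = a *\<^sub>C T x"
  using assms unfolding bounded_op_def by auto

lemma bounded_op_bound:
  assumes "bounded_op T" obtains K where "K > 0" "\<And>x. hnorm (T x) \<le> K * hnorm x"
proof -
  obtain K where K: "\<And>x. hnorm (T x) \<le> K * hnorm x" using assms unfolding bounded_op_def by blast
  have "hnorm (T x) \<le> (\<bar>K\<bar> + 1) * hnorm x" for x
    using K[of x] hnorm_nonneg[of x] by (smt (verit) mult_right_mono)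
  then show ?thesis using that[of "\<bar>K\<bar> + 1"] by simp
qed

lemma bounded_op_zero: "bounded_op T \<Longrightarrow> T 0 = 0"
  using bounded_opD(2)[of T 0 0] by simp

lemma bounded_op_minus: "bounded_op T \<Longrightarrow> T (- x) = - T x"
  using bounded_opD(2)[of T "- 1" x] by (simp add: scaleC_minus_one)

lemma bounded_op_diff: "bounded_op T \<Longrightarrow> T (x - y) = T x - T y"
  by (metis bounded_opD(1) bounded_op_minus diff_conv_add_uminus)

lemma bounded_op_sum: "bounded_op T \<Longrightarrow> T (\<Sum>k\<in>S. f k) = (\<Sum>k\<in>S. T (f k))"
  by (induction S rule: infinite_finite_induct) (simp_all add: bounded_op_zero bounded_opD)

lemma hlim_bounded_op:
  assumes "bounded_op T" "hlim X a" shows "hlim (\<lambda>n. T (X n)) (T a)"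
proof -
  obtain K where K: "\<And>x. hnorm (T x) \<le> K * hnorm x"
    using assms(1) unfolding bounded_op_def by blast
  show ?thesis
  proof (rule hlim_squeeze)
    show "hnorm (T (X n) - T a) \<le> K * hnorm (X n - a)" for n
      using K[of "X n - a"] by (simp add: bounded_op_diff[OF assms(1)])
    show "(\<lambda>n. K * hnorm (X n - a)) \<longlonglongrightarrow> 0"
      using assms(2) unfolding hlim_def by (rule tendsto_mult_right_zero)
  qed
qed

lemma bounded_op_id: "bounded_op (\<lambda>x. x)"
  unfolding bounded_op_def by (auto intro!: exI[of _ 1])

lemma bounded_op_zero_fun: "bounded_op (\<lambda>x. (0::'h::complex_hilbert))"
  unfolding bounded_op_def by (auto intro!: exI[of _ 1])

lemma bounded_op_comp: "bounded_op S \<Longrightarrow> bounded_op T \<Longrightarrow> bounded_op (\<lambda>x. S (T x))"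
proof -
  assume S: "bounded_op S" and T: "bounded_op T"
  obtain K1 where K1: "K1 > 0" "\<And>x. hnorm (S x) \<le> K1 * hnorm x" using bounded_op_bound[OF S] by blast
  obtain K2 where K2: "\<And>x. hnorm (T x) \<le> K2 * hnorm x"
    using T unfolding bounded_op_def by blast
  have "hnorm (S (T x)) \<le> (K1 * K2) * hnorm x" for x
    using K1(2)[of "T x"] K2[of x] K1(1) by (smt (verit) mult.assoc mult_left_mono)
  then show ?thesis using S T unfolding bounded_op_def by auto
qed

lemma bounded_op_add: "bounded_op S \<Longrightarrow> bounded_op T \<Longrightarrow> bounded_op (\<lambda>x. S x + T x)"
proof -
  assume S: "bounded_op S" and T: "bounded_op T"
  obtain K1 where K1: "\<And>x. hnorm (S x) \<le> K1 * hnorm x"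
    using S unfolding bounded_op_def by blast
  obtain K2 where K2: "\<And>x. hnorm (T x) \<le> K2 * hnorm x"
    using T unfolding bounded_op_def by blast
  have "hnorm (S x + T x) \<le> (K1 + K2) * hnorm x" for x
    using K1[of x] K2[of x] hnorm_triangle[of "S x" "T x"] by (simp add: algebra_simps)
  moreover have "S (x + y) + T (x + y) = S x + T x + (S y + T y)" for x y
    using S T by (simp add: bounded_opD algebra_simps)
  moreover have "S (a *\<^sub>C x) + T (a *\<^sub>C x) = a *\<^sub>C (S x + T x)" for a x
    using S T by (simp add: bounded_opD scaleC_add_right)
  ultimately show ?thesis unfolding bounded_op_def by blast
qed

lemma bounded_op_scaleC: "bounded_op T \<Longrightarrow> bounded_op (\<lambda>x. c *\<^sub>C T x)"
proof -
  assume T: "bounded_op T"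
  obtain K where K: "\<And>x. hnorm (T x) \<le> K * hnorm x"
    using T unfolding bounded_op_def by blast
  have "hnorm (c *\<^sub>C T x) \<le> (cmod c * K) * hnorm x" for x
    using K[of x] by (simp add: hnorm_scaleC mult.assoc mult_left_mono)
  moreover have "c *\<^sub>C T (x + y) = c *\<^sub>C T x + c *\<^sub>C T y" for x y
    using T by (simp add: bounded_opD scaleC_add_right)
  moreover have "c *\<^sub>C T (a *\<^sub>C x) = a *\<^sub>C (c *\<^sub>C T x)" for a x
    using T by (simp add: bounded_opD scaleC_scaleC mult.commute)
  ultimately show ?thesis unfolding bounded_op_def by blast
qed

lemma bounded_op_diff_fun: "bounded_op S \<Longrightarrow> bounded_op T \<Longrightarrow> bounded_op (\<lambda>x. S x - T x)"
  using bounded_op_add[of S "\<lambda>x. (- 1) *\<^sub>C T x"] bounded_op_scaleC[of T "- 1"]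
  by (simp add: scaleC_minus_one)

definition hermitian :: "('h::complex_hilbert \<Rightarrow> 'h) \<Rightarrow> bool" where
  "hermitian T \<longleftrightarrow> (\<forall>x y. cinner (T x) y = cinner x (T y))"

definition positive_op :: "('h::complex_hilbert \<Rightarrow> 'h) \<Rightarrow> bool" where
  "positive_op T \<longleftrightarrow> hermitian T \<and> (\<forall>x. 0 \<le> Re (cinner x (T x)))"

lemma hermitian_form_real: "hermitian T \<Longrightarrow> cinner x (T x) \<in> \<real>"
  unfolding hermitian_def by (metis Reals_cnj_iff cinner_conj)

lemma hermitian_id: "hermitian (\<lambda>x. x)"
  by (simp add: hermitian_def)

lemma hermitian_diff: "hermitian S \<Longrightarrow> hermitian T \<Longrightarrow> hermitian (\<lambda>x. S x - T x)"
  unfolding hermitian_def by (simp add: cinner_diff_left cinner_diff_right)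

lemma hermitian_comp:
  assumes "hermitian S" "hermitian T" "\<And>x. S (T x) = T (S x)"
  shows "hermitian (\<lambda>x. S (T x))"
  using assms unfolding hermitian_def by metis

lemma hermitian_real_scaleC: "hermitian T \<Longrightarrow> hermitian (\<lambda>x. complex_of_real r *\<^sub>C T x)"
  unfolding hermitian_def by (simp add: cinner_scaleC_left cinner_scaleC_right)

lemma Re_cinner_real_scaleC: "Re (cinner x (complex_of_real r *\<^sub>C y)) = r * Re (cinner x y)"
  by (simp add: cinner_scaleC_right)

lemma hermitian_if_form_real:
  assumes T: "bounded_op T" and real: "\<And>x. cinner x (T x) \<in> \<real>"
  shows "hermitian T"
proof -
  define s where "s x y = cinner x (T y) - cinner (T x) y" for x y
  have s0: "s x x = 0" for x
    using real[of x] unfolding s_def by (metis Reals_cnj_iff cinner_conj diff_self)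
  text \<open>Polarization along \<open>x + y\<close> and \<open>x + i y\<close>.\<close>
  have add: "s x y + s y x = s (x + y) (x + y) - s x x - s y y" for x y
    unfolding s_def using T by (simp add: bounded_opD cinner_add_left cinner_add_right algebra_simps)
  have add_i: "\<i> * (s x y - s y x) = s (x + \<i> *\<^sub>C y) (x + \<i> *\<^sub>C y) - s x x - s y y" for x y
    unfolding s_def using T
    by (simp add: bounded_opD cinner_add_left cinner_add_right cinner_scaleC_left
        cinner_scaleC_right algebra_simps)
  have "s x y = 0" for x y
  proof -
    have "s x y + s y x = 0" "s x y - s y x = 0" using add[of x y] add_i[of x y] by (simp_all add: s0)
    then show ?thesis by (simp add: algebra_simps)
  qed
  then show ?thesis unfolding hermitian_def s_def by (metis eq_iff_diff_eq_0)
qed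

lemma positive_op_idempotent:
  assumes "hermitian E" "\<And>x. E (E x) = E x" shows "positive_op E"
proof -
  have "cinner x (E x) = cinner (E x) (E x)" for x using assms unfolding hermitian_def by metis
  then show ?thesis using assms(1) unfolding positive_op_def by (simp add: cinner_self_nonneg)
qed

lemma positive_op_real_scaleC: "positive_op T \<Longrightarrow> 0 \<le> r \<Longrightarrow> positive_op (\<lambda>x. complex_of_real r *\<^sub>C T x)"
  unfolding positive_op_def by (auto intro: hermitian_real_scaleC simp: Re_cinner_real_scaleC)

lemma op_le_iff_positive_op:
  assumes "bounded_op S" "bounded_op T"
  shows "op_le S T \<longleftrightarrow> positive_op (\<lambda>x. T x - S x)"
proof
  assume "op_le S T"
  then show "positive_op (\<lambda>x. T x - S x)"
    unfolding op_le_def positive_op_def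
    using hermitian_if_form_real[OF bounded_op_diff_fun[OF assms(2,1)]] by blast
qed (auto simp: op_le_def positive_op_def dest: hermitian_form_real)

lemma op_le_zero_iff_positive_op: "bounded_op T \<Longrightarrow> op_le zero_op T \<longleftrightarrow> positive_op T"
  using op_le_iff_positive_op[OF bounded_op_zero_fun] by (simp add: zero_op_def)

lemma op_le_antisym:
  assumes "bounded_op S" "bounded_op T" "op_le S T" "op_le T S"
  shows "S = T"
proof -
  define D where "D x = T x - S x" for x
  have D: "bounded_op D" unfolding D_def by (rule bounded_op_diff_fun[OF assms(2,1)])
  have "cinner x (D x) = 0" for x
  proof -
    have "cinner x (D x) \<in> \<real>" "0 \<le> Re (cinner x (D x))" "0 \<le> Re (- cinner x (D x))"
      using assms(3,4) unfolding op_le_def D_def by (auto simp: cinner_diff_right)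
    then show ?thesis by (simp add: complex_is_Real_iff complex_eq_iff)
  qed
  then have herm: "hermitian D" and herm_i: "hermitian (\<lambda>x. \<i> *\<^sub>C D x)"
    by (auto intro!: hermitian_if_form_real bounded_op_scaleC D simp: cinner_scaleC_right)
  have "- \<i> * cinner (D x) (D x) = \<i> * cinner (D x) (D x)" for x
  proof -
    have "cinner (\<i> *\<^sub>C D x) (D x) = cinner x (\<i> *\<^sub>C D (D x))"
      using herm_i unfolding hermitian_def by blast
    moreover have "cinner (D x) (D x) = cinner x (D (D x))"
      using herm unfolding hermitian_def by blast
    ultimately show ?thesis by (simp add: cinner_scaleC_left cinner_scaleC_right)
  qed
  then have "T x - S x = 0" for x unfolding D_def by simp
  then show ?thesis by (simp add: fun_eq_iff)
qed

lemma positive_op_norm_sq_le: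
  assumes D: "bounded_op D" "positive_op D"
    and le: "\<And>y. Re (cinner y (D y)) \<le> K * (hnorm y)\<^sup>2"
  shows "(hnorm (D x))\<^sup>2 \<le> K * Re (cinner x (D x))"
proof -
  have herm: "hermitian D" and nonneg: "\<And>y. 0 \<le> Re (cinner y (D y))"
    using D(2) unfolding positive_op_def by auto
  text \<open>Cauchy--Schwarz for the form \<open>(x, y) \<mapsto> \<langle>x, D y\<rangle>\<close>, applied to \<open>x\<close> and \<open>D x\<close>.\<close>
  have "(cmod (cinner x (D (D x))))\<^sup>2 \<le> Re (cinner x (D x)) * Re (cinner (D x) (D (D x)))"
  proof (rule hermitian_form_cauchy_schwarz[where s = "\<lambda>x y. cinner x (D y)"])
    show "cinner y (D x) = cnj (cinner x (D y))" for x y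
      using herm unfolding hermitian_def by (metis cinner_conj)
    show "cinner x (D x) \<in> \<real> \<and> 0 \<le> Re (cinner x (D x))" for x
      using hermitian_form_real[OF herm] nonneg by blast
  qed (simp_all add: D bounded_opD cinner_add_left cinner_add_right cinner_scaleC_left cinner_scaleC_right)
  also have "\<dots> \<le> Re (cinner x (D x)) * (K * (hnorm (D x))\<^sup>2)"
    using nonneg[of x] le[of "D x"] by (intro mult_left_mono) auto
  finally have sq: "(hnorm (D x))\<^sup>2 * (hnorm (D x))\<^sup>2 \<le> (K * Re (cinner x (D x))) * (hnorm (D x))\<^sup>2"
    using herm unfolding hermitian_def
    by (metis cinner_self_hnorm norm_of_real power2_abs power2_eq_square mult.commute mult.left_commute)
  show ?thesis
  proof (cases "D x = 0")
    case True
    have "0 \<le> K * Re (cinner x (D x))"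
    proof (cases "0 \<le> K")
      case False
      then have "Re (cinner x (D x)) = 0"
        using nonneg[of x] le[of x] mult_nonpos_nonneg[of K "(hnorm x)\<^sup>2"] by simp
      then show ?thesis by simp
    qed (use nonneg[of x] in simp)
    then show ?thesis using True by simp
  next
    case False
    then show ?thesis using mult_right_le_imp_le[OF sq] by simp
  qed
qed

section \<open>Riesz representation and adjoints\<close>

lemma min_norm_point_exists:
  fixes C :: "'h::complex_hilbert set"
  assumes "C \<noteq> {}"
    and midpoint: "\<And>x y. x \<in> C \<Longrightarrow> y \<in> C \<Longrightarrow> complex_of_real (1/2) *\<^sub>C (x + y) \<in> C"
    and closed: "\<And>X l. (\<And>n. X n \<in> C) \<Longrightarrow> hlim X l \<Longrightarrow> l \<in> C"
  obtains x0 where "x0 \<in> C" "\<And>y. y \<in> C \<Longrightarrow> hnorm x0 \<le> hnorm y"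
proof -
  define d where "d = Inf ((\<lambda>x. (hnorm x)\<^sup>2) ` C)"
  have d_le: "d \<le> (hnorm x)\<^sup>2" if "x \<in> C" for x
    unfolding d_def using that by (intro cInf_lower) (auto intro: bdd_belowI[of _ 0])
  have "\<exists>x\<in>C. (hnorm x)\<^sup>2 < d + 1 / real (Suc n)" for n
    using cInf_lessD[of "(\<lambda>x. (hnorm x)\<^sup>2) ` C" "d + 1 / real (Suc n)"] assms(1)
    unfolding d_def by auto
  then obtain xs where xs_C: "\<And>n. xs n \<in> C"
    and xs_small: "\<And>n. (hnorm (xs n))\<^sup>2 < d + 1 / real (Suc n)"
    by metis
  text \<open>By the parallelogram law, points of \<open>C\<close> of nearly minimal norm are close together.\<close>
  have "(hnorm (xs m - xs n))\<^sup>2 \<le> 4 / real (Suc n)" if "n \<le> m" for m n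
  proof -
    have "d \<le> (hnorm (complex_of_real (1/2) *\<^sub>C (xs m + xs n)))\<^sup>2"
      by (rule d_le[OF midpoint[OF xs_C xs_C]])
    then have "4 * d \<le> (hnorm (xs m + xs n))\<^sup>2"
      by (simp add: hnorm_scaleC power_mult_distrib power_divide)
    moreover have "2 / real (Suc m) \<le> 2 / real (Suc n)" using that by (simp add: frac_le)
    ultimately show ?thesis
      using parallelogram_law[of "xs m" "xs n"] xs_small[of m] xs_small[of n] by simp
  qed
  moreover have "(\<lambda>n. 4 / real (Suc n)) \<longlonglongrightarrow> 0" by (rule LIMSEQ_Suc[OF lim_const_over_n])
  ultimately obtain x0 where x0: "hlim xs x0" by (rule hlim_if_sq_dist_le)
  have x0_d: "(hnorm x0)\<^sup>2 \<le> d + 0"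
  proof (rule LIMSEQ_le)
    show "(\<lambda>n. (hnorm (xs n))\<^sup>2) \<longlonglongrightarrow> (hnorm x0)\<^sup>2" by (intro tendsto_power hlim_hnorm x0)
    show "(\<lambda>n. d + 1 / real (Suc n)) \<longlonglongrightarrow> d + 0"
      by (intro tendsto_add tendsto_const LIMSEQ_Suc[OF lim_const_over_n])
  qed (use xs_small less_imp_le in blast)
  have "hnorm x0 \<le> hnorm y" if "y \<in> C" for y
  proof (rule power2_le_imp_le)
    show "(hnorm x0)\<^sup>2 \<le> (hnorm y)\<^sup>2" using x0_d d_le[OF that] by linarith
  qed simp
  with closed[OF xs_C x0] show ?thesis by (rule that)
qed

lemma min_norm_orthogonal:
  assumes "\<And>t. hnorm x0 \<le> hnorm (x0 + t *\<^sub>C k)"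
  shows "cinner x0 k = 0"
proof -
  define b where "b = (cmod (cinner x0 k))\<^sup>2"
  define q where "q = (hnorm k)\<^sup>2"
  have q0: "0 \<le> q" unfolding q_def by simp
  text \<open>Move from \<open>x0\<close> in the direction \<open>-cnj \<langle>x0, k\<rangle> k\<close> by a real step \<open>s\<close>.\<close>
  have step: "0 \<le> - 2 * s * b + s\<^sup>2 * b * q" for s :: real
  proof -
    define t where "t = - complex_of_real s * cnj (cinner x0 k)"
    have "t * cinner x0 k = - complex_of_real s * (cinner x0 k * cnj (cinner x0 k))"
      unfolding t_def by (simp add: mult.commute mult.left_commute)
    then have "t * cinner x0 k = - complex_of_real (s * b)"
      unfolding b_def complex_norm_square[symmetric] by simp
    moreover have "(cmod t)\<^sup>2 = s\<^sup>2 * b"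
      unfolding t_def b_def by (simp add: norm_mult power_mult_distrib)
    moreover have "(hnorm x0)\<^sup>2 \<le> (hnorm (x0 + t *\<^sub>C k))\<^sup>2" using assms[of t] by (simp add: power_mono)
    ultimately show ?thesis unfolding hnorm_add_scaleC_sq q_def by simp
  qed
  define s where "s = 1 / (q + 1)"
  have s0: "0 < s" and sq: "s * q \<le> 1" using q0 by (simp_all add: s_def field_simps)
  have "s\<^sup>2 * b * q = (s * b) * (s * q)" by (simp add: power2_eq_square)
  also have "\<dots> \<le> s * b" using mult_left_mono[OF sq, of "s * b"] s0 by (simp add: b_def)
  finally have "s * b \<le> 0" using step[of s] by linarith
  then have "b \<le> 0" using s0 by (simp add: mult_le_0_iff)
  then show ?thesis unfolding b_def by simp
qed

lemma riesz_representation: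
  fixes f :: "'h::complex_hilbert \<Rightarrow> complex"
  assumes add: "\<And>x y. f (x + y) = f x + f y" and scale: "\<And>a x. f (a *\<^sub>C x) = a * f x"
    and bound: "\<And>x. cmod (f x) \<le> K * hnorm x"
  obtains z where "\<And>x. f x = cinner z x"
proof (cases "\<forall>x. f x = 0")
  case True
  then show ?thesis using that[of 0] by simp
next
  case False
  then obtain u where u: "f u \<noteq> 0" by blast
  have f_diff: "f (x - y) = f x - f y" for x y
    using add[of x "(- 1) *\<^sub>C y"] scale[of "- 1" y] by (simp add: scaleC_minus_one)
  text \<open>The point of least norm on the hyperplane \<open>f = 1\<close> is orthogonal to \<open>ker f\<close>.\<close>
  obtain x0 where x0: "f x0 = 1" and x0_min: "\<And>y. f y = 1 \<Longrightarrow> hnorm x0 \<le> hnorm y"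
  proof (rule min_norm_point_exists[of "{x. f x = 1}"])
    show "{x. f x = 1} \<noteq> {}" using u scale[of "1 / f u" u] by auto
    show "complex_of_real (1/2) *\<^sub>C (x + y) \<in> {x. f x = 1}" if "x \<in> {x. f x = 1}" "y \<in> {x. f x = 1}" for x y
      using that by (simp add: add scale)
    show "l \<in> {x. f x = 1}" if "\<And>n. X n \<in> {x. f x = 1}" "hlim X l" for X l
    proof -
      have "cmod (1 - f l) \<le> K * hnorm (X n - l)" for n
        using bound[of "X n - l"] that(1)[of n] by (simp add: f_diff)
      moreover have "(\<lambda>n. K * hnorm (X n - l)) \<longlonglongrightarrow> 0"
        using that(2) unfolding hlim_def by (rule tendsto_mult_right_zero)
      ultimately have "cmod (1 - f l) \<le> 0"
        by (intro tendsto_lowerbound[of "\<lambda>n. K * hnorm (X n - l)"]) (auto intro: always_eventually)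
      then show ?thesis by simp
    qed
  qed auto
  have ortho: "cinner x0 k = 0" if "f k = 0" for k
    by (rule min_norm_orthogonal) (use that x0 in \<open>auto intro: x0_min simp: add scale\<close>)
  have rep: "cinner x0 x = f x * cinner x0 x0" for x
    using ortho[of "x - f x *\<^sub>C x0"] by (simp add: f_diff scale x0 cinner_diff_right cinner_scaleC_right)
  have "f 0 = 0" using scale[of 0 0] by simp
  then have "cinner x0 x0 \<noteq> 0" using x0 by (metis cinner_self_eq_zero zero_neq_one)
  then have "f x = cinner (cnj (1 / cinner x0 x0) *\<^sub>C x0) x" for x
    using rep[of x] by (simp add: cinner_scaleC_left)
  then show ?thesis by (rule that)
qed

lemma adjoint_exists:
  assumes T: "bounded_op T"
  shows "\<exists>S. \<forall>x y. cinner (T x) y = cinner x (S y)"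
proof -
  obtain K where K: "\<And>x. hnorm (T x) \<le> K * hnorm x"
    using T unfolding bounded_op_def by blast
  have "\<exists>z. \<forall>x. cinner y (T x) = cinner z x" for y
  proof -
    have "cmod (cinner y (T x)) \<le> (hnorm y * K) * hnorm x" for x
      using cauchy_schwarz[of y "T x"] K[of x] by (smt (verit) hnorm_nonneg mult.assoc mult_left_mono)
    then obtain z where "\<And>x. cinner y (T x) = cinner z x"
      by (rule riesz_representation[rotated 2])
        (use T in \<open>simp_all add: bounded_opD cinner_add_right cinner_scaleC_right\<close>)
    then show ?thesis by blast
  qed
  then obtain S where S: "\<And>y x. cinner y (T x) = cinner (S y) x" by metis
  then have "cinner (T x) y = cinner x (S y)" for x y by (metis cinner_conj)
  then show ?thesis by blast
qed

lemma adj_char: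
  assumes "bounded_op T"
  shows "cinner (T x) y = cinner x (adj T y)"
proof -
  have "\<exists>!S. \<forall>x y. cinner (T x) y = cinner x (S y)"
    using adjoint_exists[OF assms] by (metis cinner_eqI ext)
  then have "\<forall>x y. cinner (T x) y = cinner x (adj T y)"
    unfolding adj_def by (rule theI')
  then show ?thesis by blast
qed

lemma adj_eq_self_iff_hermitian:
  assumes "bounded_op T"
  shows "adj T = T \<longleftrightarrow> hermitian T"
  unfolding hermitian_def using adj_char[OF assms] by (metis cinner_eqI ext)

section \<open>Strong limits of monotone sequences\<close>

lemma strong_limit_bounded_op:
  assumes "\<And>n. bounded_op (X n)" and "\<And>n x. hnorm (X n x) \<le> K * hnorm x"
    and lim: "\<And>x. hlim (\<lambda>n. X n x) (L x)"
  shows "bounded_op L"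
  unfolding bounded_op_def
proof (intro conjI allI exI)
  fix x y
  have "hlim (\<lambda>n. X n (x + y)) (L x + L y)"
    using hlim_add[OF lim lim] by (simp add: bounded_opD assms(1))
  then show "L (x + y) = L x + L y" using lim hlim_unique by blast
next
  fix a x
  have "hlim (\<lambda>n. X n (a *\<^sub>C x)) (a *\<^sub>C L x)"
    using hlim_scaleC[OF lim] by (simp add: bounded_opD assms(1))
  then show "L (a *\<^sub>C x) = a *\<^sub>C L x" using lim hlim_unique by blast
next
  fix x
  show "hnorm (L x) \<le> K * hnorm x"
    by (rule LIMSEQ_le_const2[OF hlim_hnorm[OF lim]]) (use assms(2) in auto)
qed

lemma strong_limit_hermitian:
  assumes "\<And>n. hermitian (X n)" and lim: "\<And>x. hlim (\<lambda>n. X n x) (L x)"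
  shows "hermitian L"
  unfolding hermitian_def
proof (intro allI)
  fix x y
  have "(\<lambda>n. cinner (X n x) y) \<longlonglongrightarrow> cinner (L x) y" by (rule hlim_cinner_left[OF lim])
  moreover have "(\<lambda>n. cinner (X n x) y) \<longlonglongrightarrow> cinner x (L y)"
    using hlim_cinner_right[OF lim] assms(1) unfolding hermitian_def by presburger
  ultimately show "cinner (L x) y = cinner x (L y)" by (rule LIMSEQ_unique)
qed

lemma increasing_op_seq_diff_bound:
  assumes bounded: "\<And>n. bounded_op (X n)" and herm: "\<And>n. hermitian (X n)"
    and inc: "\<And>n x. Re (cinner x (X n x)) \<le> Re (cinner x (X (Suc n) x))"
    and upper_bound: "\<And>n x. Re (cinner x (X n x)) \<le> c * (hnorm x)\<^sup>2"
  obtains K where "K > 0"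
    and "\<And>m n x. Re (cinner x (X m x)) - Re (cinner x (X n x)) \<le> K * (hnorm x)\<^sup>2"
    and "\<And>m n x. n \<le> m \<Longrightarrow>
      (hnorm (X m x - X n x))\<^sup>2 \<le> K * (Re (cinner x (X m x)) - Re (cinner x (X n x)))"
proof -
  obtain K0 where K0: "K0 > 0" "\<And>x. hnorm (X 0 x) \<le> K0 * hnorm x"
    using bounded_op_bound[OF bounded] by blast
  define K where "K = \<bar>c\<bar> + K0"
  have mono: "Re (cinner x (X n x)) \<le> Re (cinner x (X m x))" if "n \<le> m" for n m x
    using that by (induction m) (auto simp: le_Suc_eq intro: order.trans[OF _ inc])
  have below: "- K0 * (hnorm x)\<^sup>2 \<le> Re (cinner x (X n x))" for n x
  proof -
    have "\<bar>Re (cinner x (X 0 x))\<bar> \<le> hnorm x * (K0 * hnorm x)"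
      using cauchy_schwarz[of x "X 0 x"] abs_Re_le_cmod[of "cinner x (X 0 x)"] K0(2)[of x]
      by (smt (verit) hnorm_nonneg mult_left_mono)
    then show ?thesis using mono[of 0 n x] by (simp add: power2_eq_square algebra_simps)
  qed
  have upper: "Re (cinner x (X m x)) - Re (cinner x (X n x)) \<le> K * (hnorm x)\<^sup>2" for m n x
    using upper_bound[where n=m and x=x] below[where n=n and x=x]
      mult_right_mono[OF abs_ge_self[of c], of "(hnorm x)\<^sup>2"]
    by (simp add: K_def algebra_simps)
  text \<open>For \<open>n \<le> m\<close> the difference \<open>X m - X n\<close> lies between \<open>0\<close> and \<open>K\<close>.\<close>
  have "(hnorm (X m x - X n x))\<^sup>2 \<le> K * (Re (cinner x (X m x)) - Re (cinner x (X n x)))"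
    if "n \<le> m" for m n x
  proof -
    have "positive_op (\<lambda>x. X m x - X n x)"
      using mono[OF that] herm unfolding positive_op_def
      by (auto intro: hermitian_diff simp: cinner_diff_right)
    from positive_op_norm_sq_le[OF bounded_op_diff_fun[OF bounded bounded] this, of K x]
    show ?thesis using upper by (simp add: cinner_diff_right)
  qed
  moreover have "K > 0" using K0 by (simp add: K_def add_nonneg_pos)
  ultimately show ?thesis using that upper by blast
qed

lemma increasing_op_seq_strong_limit:
  assumes bounded: "\<And>n. bounded_op (X n)" and herm: "\<And>n. hermitian (X n)"
    and inc: "\<And>n x. Re (cinner x (X n x)) \<le> Re (cinner x (X (Suc n) x))"
    and upper_bound: "\<And>n x. Re (cinner x (X n x)) \<le> c * (hnorm x)\<^sup>2"
  obtains L K where "bounded_op L" "hermitian L" "\<And>x. hlim (\<lambda>n. X n x) (L x)"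
    and "\<And>n x. hnorm (X n x) \<le> K * hnorm x"
proof -
  obtain K where K: "K > 0"
    and upper: "\<And>m n x. Re (cinner x (X m x)) - Re (cinner x (X n x)) \<le> K * (hnorm x)\<^sup>2"
    and diff: "\<And>m n x. n \<le> m \<Longrightarrow>
      (hnorm (X m x - X n x))\<^sup>2 \<le> K * (Re (cinner x (X m x)) - Re (cinner x (X n x)))"
    using increasing_op_seq_diff_bound[where X=X and c=c, OF assms] by blast
  obtain K0 where K0: "\<And>x. hnorm (X 0 x) \<le> K0 * hnorm x"
    using bounded[of 0] unfolding bounded_op_def by blast
  have uniform: "hnorm (X n x) \<le> (K0 + K) * hnorm x" for n x
  proof -
    have "(hnorm (X n x - X 0 x))\<^sup>2 \<le> K * (Re (cinner x (X n x)) - Re (cinner x (X 0 x)))"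
      by (rule diff) simp
    also have "\<dots> \<le> K * (K * (hnorm x)\<^sup>2)"
      using upper[where m=n and n=0 and x=x] K by (intro mult_left_mono) auto
    also have "\<dots> = (K * hnorm x)\<^sup>2" by (simp add: power2_eq_square)
    finally have "hnorm (X n x - X 0 x) \<le> K * hnorm x"
      by (rule power2_le_imp_le) (use K in simp)
    then show ?thesis using hnorm_triangle[of "X n x - X 0 x" "X 0 x"] K0[of x] by (simp add: algebra_simps)
  qed
  text \<open>The forms \<open>\<langle>x, X n x\<rangle>\<close> increase to a limit, so \<open>X n x\<close> is Cauchy by \<open>diff\<close>.\<close>
  have "\<exists>l. hlim (\<lambda>n. X n x) l" for x
  proof -
    define r where "r n = Re (cinner x (X n x))" for n
    have "incseq r" unfolding r_def by (intro incseq_SucI inc)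
    moreover have "\<forall>n. r n \<le> c * (hnorm x)\<^sup>2" unfolding r_def using upper_bound by blast
    ultimately obtain l where "r \<longlonglongrightarrow> l" using incseq_convergent by blast
    have "(hnorm (X m x - X n x))\<^sup>2 \<le> K * (l - r n)" if "n \<le> m" for m n
      using diff[OF that, of x] incseq_le[OF \<open>incseq r\<close> \<open>r \<longlonglongrightarrow> l\<close>, of m] K
        mult_left_mono[of "r m - r n" "l - r n" K]
      unfolding r_def by linarith
    moreover have "(\<lambda>n. K * (l - r n)) \<longlonglongrightarrow> 0"
      using tendsto_diff[OF tendsto_const \<open>r \<longlonglongrightarrow> l\<close>, of l] by (intro tendsto_mult_right_zero) simp
    ultimately obtain y where "hlim (\<lambda>n. X n x) y" by (rule hlim_if_sq_dist_le)
    then show ?thesis by blast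
  qed
  then obtain L where L: "\<And>x. hlim (\<lambda>n. X n x) (L x)" by metis
  show ?thesis
    using strong_limit_bounded_op[OF bounded uniform L] strong_limit_hermitian[OF herm L] L uniform
    by (rule that)
qed

locale abelian_vna =
  fixes M :: "('h::complex_hilbert \<Rightarrow> 'h) set"
  assumes von_neumann: "von_neumann_algebra M" and abelian: "abelian M"
begin

lemma bounded_op_of_mem: "A \<in> M \<Longrightarrow> bounded_op A"
  using von_neumann unfolding von_neumann_algebra_def bops_def by auto

lemma mem_if_commutes_with_commutant:
  assumes "bounded_op T" "\<And>S. S \<in> commutant M \<Longrightarrow> (\<lambda>x. T (S x)) = (\<lambda>x. S (T x))"
  shows "T \<in> M"
proof -
  have "T \<in> commutant (commutant M)"
    using assms unfolding commutant_def bops_def by (auto simp: o_def)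
  then show ?thesis using von_neumann unfolding von_neumann_algebra_def by simp
qed

lemma commutantD:
  assumes "S \<in> commutant M"
  shows "A \<in> M \<Longrightarrow> S (A x) = A (S x)" and "bounded_op S"
  using assms unfolding commutant_def bops_def by (auto simp: o_def fun_eq_iff)

lemma commute: "A \<in> M \<Longrightarrow> B \<in> M \<Longrightarrow> A (B x) = B (A x)"
  using abelian unfolding abelian_def by (auto simp: o_def fun_eq_iff)

lemma id_mem: "(\<lambda>x. x) \<in> M"
  by (rule mem_if_commutes_with_commutant[OF bounded_op_id]) simp

lemma comp_mem: "A \<in> M \<Longrightarrow> B \<in> M \<Longrightarrow> (\<lambda>x. A (B x)) \<in> M"
proof (rule mem_if_commutes_with_commutant)
  assume "A \<in> M" "B \<in> M"
  then show "bounded_op (\<lambda>x. A (B x))" by (simp add: bounded_op_comp bounded_op_of_mem)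
  fix S assume "S \<in> commutant M"
  then show "(\<lambda>x. A (B (S x))) = (\<lambda>x. S (A (B x)))"
    using \<open>A \<in> M\<close> \<open>B \<in> M\<close> by (simp add: commutantD(1))
qed

lemma comp_mem': "A \<in> M \<Longrightarrow> B \<in> M \<Longrightarrow> A \<circ> B \<in> M"
  using comp_mem by (simp add: o_def)

lemma add_mem: "A \<in> M \<Longrightarrow> B \<in> M \<Longrightarrow> (\<lambda>x. A x + B x) \<in> M"
proof (rule mem_if_commutes_with_commutant)
  assume "A \<in> M" "B \<in> M"
  then show "bounded_op (\<lambda>x. A x + B x)" by (simp add: bounded_op_add bounded_op_of_mem)
  fix S assume "S \<in> commutant M"
  then show "(\<lambda>x. A (S x) + B (S x)) = (\<lambda>x. S (A x + B x))"
    using \<open>A \<in> M\<close> \<open>B \<in> M\<close> by (simp add: commutantD bounded_opD)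
qed

lemma scaleC_mem: "A \<in> M \<Longrightarrow> (\<lambda>x. c *\<^sub>C A x) \<in> M"
proof (rule mem_if_commutes_with_commutant)
  assume "A \<in> M"
  then show "bounded_op (\<lambda>x. c *\<^sub>C A x)" by (simp add: bounded_op_scaleC bounded_op_of_mem)
  fix S assume "S \<in> commutant M"
  then show "(\<lambda>x. c *\<^sub>C A (S x)) = (\<lambda>x. S (c *\<^sub>C A x))"
    using \<open>A \<in> M\<close> by (simp add: commutantD bounded_opD)
qed

lemma diff_mem: "A \<in> M \<Longrightarrow> B \<in> M \<Longrightarrow> (\<lambda>x. A x - B x) \<in> M"
  using add_mem[of A "\<lambda>x. (- 1) *\<^sub>C B x"] scaleC_mem[of B "- 1"] by (simp add: scaleC_minus_one)

lemma zero_mem: "(\<lambda>x. 0) \<in> M"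
  using diff_mem[OF id_mem id_mem] by simp

lemma funpow_mem: "U \<in> M \<Longrightarrow> U ^^ n \<in> M"
proof (induction n)
  case 0
  then show ?case using id_mem by (simp add: id_def)
next
  case (Suc n)
  then show ?case using comp_mem[of U "U ^^ n"] by (simp add: o_def)
qed

lemma strong_limit_mem:
  assumes mem: "\<And>n. X n \<in> M" and "bounded_op L" and lim: "\<And>x. hlim (\<lambda>n. X n x) (L x)"
  shows "L \<in> M"
proof (rule mem_if_commutes_with_commutant[OF \<open>bounded_op L\<close>])
  fix S assume S: "S \<in> commutant M"
  have "hlim (\<lambda>n. X n (S x)) (S (L x))" for x
    using hlim_bounded_op[OF commutantD(2)[OF S] lim] commutantD(1)[OF S mem] by simp
  then show "(\<lambda>x. L (S x)) = (\<lambda>x. S (L x))" using lim hlim_unique by blast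
qed

lemma increasing_seq_strong_limit_mem:
  assumes "\<And>n. X n \<in> M" and "\<And>n. hermitian (X n)"
    and "\<And>n x. Re (cinner x (X n x)) \<le> Re (cinner x (X (Suc n) x))"
    and "\<And>n x. Re (cinner x (X n x)) \<le> c * (hnorm x)\<^sup>2"
  obtains L K where "L \<in> M" "hermitian L" "\<And>x. hlim (\<lambda>n. X n x) (L x)"
    and "\<And>n x. hnorm (X n x) \<le> K * hnorm x"
proof -
  obtain L K where L: "bounded_op L" "hermitian L" "\<And>x. hlim (\<lambda>n. X n x) (L x)"
    and K: "\<And>n x. hnorm (X n x) \<le> K * hnorm x"
    by (rule increasing_op_seq_strong_limit[where X=X and c=c,
          OF bounded_op_of_mem[OF assms(1)] assms(2-4)]) blast
  show ?thesis by (rule that[OF strong_limit_mem[OF assms(1) L(1,3)] L(2,3) K])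
qed

end

section \<open>Polynomials in an operator\<close>

definition poly_op :: "real poly \<Rightarrow> ('h::complex_hilbert \<Rightarrow> 'h) \<Rightarrow> 'h \<Rightarrow> 'h" where
  "poly_op p Y = (\<lambda>x. \<Sum>k\<le>degree p. complex_of_real (coeff p k) *\<^sub>C (Y ^^ k) x)"

lemma poly_op_eq_sum_atMost:
  assumes "degree p \<le> N"
  shows "poly_op p Y x = (\<Sum>k\<le>N. complex_of_real (coeff p k) *\<^sub>C (Y ^^ k) x)"
  unfolding poly_op_def
  by (rule sum.mono_neutral_left) (use assms in \<open>auto simp: coeff_eq_0\<close>)

lemma poly_op_0 [simp]: "poly_op 0 Y x = 0"
  by (simp add: poly_op_def)

lemma poly_op_add: "poly_op (p + q) Y x = poly_op p Y x + poly_op q Y x"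
proof -
  define N where "N = max (degree p) (degree q)"
  have "degree (p + q) \<le> N" unfolding N_def by (rule degree_add_le_max)
  then have "poly_op (p + q) Y x = (\<Sum>k\<le>N. complex_of_real (coeff (p + q) k) *\<^sub>C (Y ^^ k) x)"
    by (rule poly_op_eq_sum_atMost)
  also have "\<dots> = (\<Sum>k\<le>N. complex_of_real (coeff p k) *\<^sub>C (Y ^^ k) x)
      + (\<Sum>k\<le>N. complex_of_real (coeff q k) *\<^sub>C (Y ^^ k) x)"
    by (simp add: scaleC_add_left sum.distrib)
  also have "\<dots> = poly_op p Y x + poly_op q Y x"
    using poly_op_eq_sum_atMost[of p N Y x] poly_op_eq_sum_atMost[of q N Y x] by (simp add: N_def)
  finally show ?thesis .
qed

lemma poly_op_smult: "poly_op (smult a p) Y x = complex_of_real a *\<^sub>C poly_op p Y x"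
  using poly_op_eq_sum_atMost[of "smult a p" "degree p" Y x]
  by (simp add: poly_op_def scaleC_sum_right scaleC_scaleC)

lemma poly_op_diff: "poly_op (p - q) Y x = poly_op p Y x - poly_op q Y x"
  using poly_op_add[of p "- q" Y x] poly_op_smult[of "- 1" q Y x] by (simp add: scaleC_minus_one)

lemma poly_op_pCons:
  assumes "bounded_op Y"
  shows "poly_op (pCons a p) Y x = complex_of_real a *\<^sub>C x + Y (poly_op p Y x)"
proof -
  have "poly_op (pCons a p) Y x
      = (\<Sum>k\<le>Suc (degree p). complex_of_real (coeff (pCons a p) k) *\<^sub>C (Y ^^ k) x)"
    by (rule poly_op_eq_sum_atMost) (simp add: degree_pCons_le)
  also have "\<dots> = complex_of_real a *\<^sub>C x + (\<Sum>k\<le>degree p. complex_of_real (coeff p k) *\<^sub>C (Y ^^ Suc k) x)"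
    by (subst sum.atMost_Suc_shift) simp
  also have "(\<Sum>k\<le>degree p. complex_of_real (coeff p k) *\<^sub>C (Y ^^ Suc k) x) = Y (poly_op p Y x)"
    unfolding poly_op_def by (simp add: bounded_op_sum[OF assms] bounded_opD[OF assms])
  finally show ?thesis .
qed

lemma poly_op_X: "bounded_op Y \<Longrightarrow> poly_op [:0, 1:] Y x = Y x"
  by (simp add: poly_op_pCons bounded_op_zero scaleC_one)

lemma poly_op_mult:
  assumes "bounded_op Y"
  shows "poly_op (p * q) Y x = poly_op p Y (poly_op q Y x)"
proof (induction p arbitrary: x)
  case (pCons a p)
  have "poly_op (pCons a p * q) Y x = poly_op (smult a q + pCons 0 (p * q)) Y x"
    by simp
  also have "\<dots> = poly_op (pCons a p) Y (poly_op q Y x)"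
    by (simp add: poly_op_add poly_op_smult poly_op_pCons[OF assms] pCons.IH)
  finally show ?case .
qed simp

lemma poly_op_bounded_op: "bounded_op Y \<Longrightarrow> bounded_op (poly_op p Y)"
proof (induction p)
  case 0
  then show ?case using bounded_op_zero_fun by (simp add: fun_eq_iff)
next
  case (pCons a p)
  then show ?case
    using bounded_op_add[OF bounded_op_scaleC[OF bounded_op_id] bounded_op_comp[of Y "poly_op p Y"]]
    by (simp add: poly_op_pCons fun_eq_iff)
qed

lemma hermitian_funpow: "hermitian Y \<Longrightarrow> hermitian (Y ^^ k)"
  by (induction k) (auto simp: hermitian_def funpow_swap1)

lemma hermitian_poly_op: "hermitian Y \<Longrightarrow> hermitian (poly_op p Y)"
  unfolding poly_op_def hermitian_def
  using hermitian_funpow[of Y, unfolded hermitian_def]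
  by (simp add: cinner_sum_right cinner_scaleC_right cinner_scaleC_left sum_distrib_left
      cinner_sum_left)

definition nonneg_coeffs :: "real poly \<Rightarrow> bool" where
  "nonneg_coeffs p \<longleftrightarrow> (\<forall>k. 0 \<le> coeff p k)"

lemma nonneg_coeffs_add: "nonneg_coeffs p \<Longrightarrow> nonneg_coeffs q \<Longrightarrow> nonneg_coeffs (p + q)"
  by (simp add: nonneg_coeffs_def)

lemma nonneg_coeffs_smult: "0 \<le> a \<Longrightarrow> nonneg_coeffs p \<Longrightarrow> nonneg_coeffs (smult a p)"
  by (simp add: nonneg_coeffs_def)

lemma nonneg_coeffs_mult: "nonneg_coeffs p \<Longrightarrow> nonneg_coeffs q \<Longrightarrow> nonneg_coeffs (p * q)"
  unfolding nonneg_coeffs_def coeff_mult by (auto intro!: sum_nonneg)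

lemma nonneg_coeffs_X: "nonneg_coeffs [:0, 1:]"
  by (simp add: nonneg_coeffs_def coeff_pCons split: nat.split)

lemma nonneg_coeffs_0: "nonneg_coeffs 0"
  by (simp add: nonneg_coeffs_def)

lemma cinner_poly_op:
  "cinner x (poly_op p Y x) = (\<Sum>k\<le>degree p. complex_of_real (coeff p k) * cinner x ((Y ^^ k) x))"
  unfolding poly_op_def by (simp add: cinner_sum_right cinner_scaleC_right)

lemma Re_cinner_funpow_nonneg:
  assumes "positive_op Y"
  shows "0 \<le> Re (cinner x ((Y ^^ k) x))"
proof -
  have herm: "hermitian (Y ^^ j)" for j using assms hermitian_funpow unfolding positive_op_def by blast
  have "k = 2 * (k div 2) \<or> k = Suc (2 * (k div 2))" by presburger
  then obtain j where "k = 2 * j \<or> k = Suc (2 * j)" by blast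
  then show ?thesis
  proof
    assume "k = 2 * j"
    then have "cinner x ((Y ^^ k) x) = cinner ((Y ^^ j) x) ((Y ^^ j) x)"
      using herm[of j] unfolding hermitian_def by (simp add: mult_2 funpow_add)
    then show ?thesis by (simp add: cinner_self_nonneg)
  next
    assume "k = Suc (2 * j)"
    then have "cinner x ((Y ^^ k) x) = cinner ((Y ^^ j) x) (Y ((Y ^^ j) x))"
      using herm[of j] unfolding hermitian_def by (simp add: mult_2 funpow_add funpow_swap1)
    then show ?thesis using assms unfolding positive_op_def by simp
  qed
qed

lemma positive_op_poly_op:
  assumes "positive_op Y" "nonneg_coeffs p"
  shows "positive_op (poly_op p Y)"
  unfolding positive_op_def
proof
  show "hermitian (poly_op p Y)" using assms(1) hermitian_poly_op unfolding positive_op_def by blast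
  show "\<forall>x. 0 \<le> Re (cinner x (poly_op p Y x))"
    unfolding cinner_poly_op Re_sum using assms Re_cinner_funpow_nonneg
    by (auto simp: nonneg_coeffs_def intro!: sum_nonneg mult_nonneg_nonneg)
qed

lemma positive_contraction_hnorm_le:
  assumes "bounded_op Y" "positive_op Y" and le: "\<And>x. Re (cinner x (Y x)) \<le> (hnorm x)\<^sup>2"
  shows "hnorm (Y x) \<le> hnorm x"
proof -
  have "(hnorm (Y x))\<^sup>2 \<le> 1 * Re (cinner x (Y x))"
    by (rule positive_op_norm_sq_le[OF assms(1,2)]) (simp add: le)
  also have "\<dots> \<le> (hnorm x)\<^sup>2" using le by simp
  finally show ?thesis by (rule power2_le_imp_le) simp
qed

lemma Re_cinner_poly_op_le:
  assumes Y: "bounded_op Y" "positive_op Y" and le: "\<And>x. Re (cinner x (Y x)) \<le> (hnorm x)\<^sup>2"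
    and "nonneg_coeffs q"
  shows "Re (cinner x (poly_op q Y x)) \<le> poly q 1 * (hnorm x)\<^sup>2"
proof -
  have "hnorm ((Y ^^ k) x) \<le> hnorm x" for k
    by (induction k) (auto intro: order_trans[OF positive_contraction_hnorm_le[OF Y le]])
  then have "Re (cinner x ((Y ^^ k) x)) \<le> (hnorm x)\<^sup>2" for k
    using Re_cinner_le[of x "(Y ^^ k) x"] mult_left_mono[of _ "hnorm x" "hnorm x"]
    by (smt (verit) hnorm_nonneg power2_eq_square)
  then have "Re (cinner x (poly_op q Y x)) \<le> (\<Sum>k\<le>degree q. coeff q k * (hnorm x)\<^sup>2)"
    unfolding cinner_poly_op Re_sum using \<open>nonneg_coeffs q\<close>
    by (auto intro!: sum_mono mult_left_mono simp: nonneg_coeffs_def)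
  also have "\<dots> = poly q 1 * (hnorm x)\<^sup>2"
    by (simp add: poly_altdef sum_distrib_right)
  finally show ?thesis .
qed

lemma bounded_op_form_le:
  assumes "bounded_op A" obtains K where "K > 0" "\<And>x. Re (cinner x (A x)) \<le> K * (hnorm x)\<^sup>2"
proof -
  obtain K where K: "K > 0" "\<And>x. hnorm (A x) \<le> K * hnorm x" using bounded_op_bound[OF assms] by blast
  have "Re (cinner x (A x)) \<le> K * (hnorm x)\<^sup>2" for x
  proof -
    have "Re (cinner x (A x)) \<le> hnorm x * hnorm (A x)" by (rule Re_cinner_le)
    also have "\<dots> \<le> hnorm x * (K * hnorm x)" by (intro mult_left_mono K(2)) simp
    finally show ?thesis by (simp add: power2_eq_square algebra_simps)
  qed
  then show ?thesis using K(1) that by blast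
qed

section \<open>Square roots\<close>

text \<open>
  On \<open>[0, 1]\<close> the polynomials \<open>sqrt_iter n\<close> increase to \<open>1 - sqrt (1 - t)\<close>; so for
  \<open>0 \<le> W \<le> I\<close> the limit \<open>Z\<close> of \<open>sqrt_iter n (I - W)\<close> satisfies \<open>(I - Z)\<^sup>2 = W\<close>.
\<close>

fun sqrt_iter :: "nat \<Rightarrow> real poly" where
  "sqrt_iter 0 = 0"
| "sqrt_iter (Suc n) = smult (1/2) ([:0, 1:] + sqrt_iter n * sqrt_iter n)"

lemma sqrt_iter_nonneg_coeffs: "nonneg_coeffs (sqrt_iter n)"
  by (induction n)
    (auto intro!: nonneg_coeffs_smult nonneg_coeffs_add nonneg_coeffs_mult nonneg_coeffs_X nonneg_coeffs_0)

lemma sqrt_iter_Suc_diff_nonneg_coeffs: "nonneg_coeffs (sqrt_iter (Suc n) - sqrt_iter n)"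
proof (induction n)
  case 0
  then show ?case by (simp add: nonneg_coeffs_def coeff_pCons split: nat.split)
next
  case (Suc n)
  have "sqrt_iter (Suc (Suc n)) - sqrt_iter (Suc n)
      = smult (1/2) ((sqrt_iter (Suc n) + sqrt_iter n) * (sqrt_iter (Suc n) - sqrt_iter n))"
    by (simp only: sqrt_iter.simps) (simp add: algebra_simps smult_add_right smult_diff_right)
  then show ?case
    by (simp only:) (intro nonneg_coeffs_smult nonneg_coeffs_mult nonneg_coeffs_add
        sqrt_iter_nonneg_coeffs Suc.IH; simp)
qed

lemma sqrt_iter_at_1: "0 \<le> poly (sqrt_iter n) 1 \<and> poly (sqrt_iter n) 1 \<le> 1"
proof (induction n)
  case (Suc n)
  then have "(poly (sqrt_iter n) 1)\<^sup>2 \<le> 1" by (simp add: power_le_one)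
  then show ?case by (simp add: power2_eq_square add_nonneg_nonneg)
qed simp

context abelian_vna
begin

lemma poly_op_mem: "Y \<in> M \<Longrightarrow> poly_op p Y \<in> M"
proof (induction p)
  case 0
  have "poly_op 0 Y = (\<lambda>x. 0)" by (rule ext) simp
  then show ?case using zero_mem by simp
next
  case (pCons a p)
  have "poly_op (pCons a p) Y = (\<lambda>x. complex_of_real a *\<^sub>C x + Y (poly_op p Y x))"
    by (rule ext) (rule poly_op_pCons[OF bounded_op_of_mem[OF pCons.prems]])
  moreover have "(\<lambda>x. complex_of_real a *\<^sub>C x + Y (poly_op p Y x)) \<in> M"
    by (rule add_mem[OF scaleC_mem[OF id_mem] comp_mem[OF pCons.prems pCons.IH[OF pCons.prems]]])
  ultimately show ?case by simp
qed

lemma sqrt_iter_limit: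
  assumes "Y \<in> M" "positive_op Y" and le: "\<And>x. Re (cinner x (Y x)) \<le> (hnorm x)\<^sup>2"
  obtains Z where "Z \<in> M" "hermitian Z" "\<And>x. Re (cinner x (Z x)) \<le> (hnorm x)\<^sup>2"
    and "\<And>x. Z x + Z x = Y x + Z (Z x)"
proof -
  have Y: "bounded_op Y" using bounded_op_of_mem[OF assms(1)] .
  define Zs where "Zs n = poly_op (sqrt_iter n) Y" for n
  have inc: "Re (cinner x (Zs n x)) \<le> Re (cinner x (Zs (Suc n) x))" for n x
    using positive_op_poly_op[OF assms(2) sqrt_iter_Suc_diff_nonneg_coeffs[of n]]
    unfolding Zs_def positive_op_def by (simp add: poly_op_diff cinner_diff_right)
  have bound: "Re (cinner x (Zs n x)) \<le> 1 * (hnorm x)\<^sup>2" for n x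
    using Re_cinner_poly_op_le[OF Y assms(2) le sqrt_iter_nonneg_coeffs, of x n]
      sqrt_iter_at_1[of n] mult_right_mono[of "poly (sqrt_iter n) 1" 1 "(hnorm x)\<^sup>2"]
    unfolding Zs_def by simp
  obtain Z K where "Z \<in> M" "hermitian Z" and lim: "\<And>x. hlim (\<lambda>n. Zs n x) (Z x)"
    and K: "\<And>n x. hnorm (Zs n x) \<le> K * hnorm x"
    by (rule increasing_seq_strong_limit_mem[where X = Zs and c = 1])
      (use poly_op_mem[OF assms(1)] hermitian_poly_op assms(2) inc bound in
        \<open>auto simp: Zs_def positive_op_def\<close>)
  have "Re (cinner x (Z x)) \<le> (hnorm x)\<^sup>2" for x
    using bound by (intro LIMSEQ_le_const2[OF tendsto_Re[OF hlim_cinner_right[OF lim]]]) auto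
  moreover have "Z x + Z x = Y x + Z (Z x)" for x
  proof -
    text \<open>Pass to the limit in \<open>2 Z\<^sub>n\<^sub>+\<^sub>1 = Y + Z\<^sub>n\<^sup>2\<close>, using the uniform bound for \<open>Z\<^sub>n\<^sup>2\<close>.\<close>
    have "hlim (\<lambda>n. Zs n (Zs n x)) (Z (Z x))"
    proof (rule hlim_squeeze)
      show "hnorm (Zs n (Zs n x) - Z (Z x)) \<le> K * hnorm (Zs n x - Z x) + hnorm (Zs n (Z x) - Z (Z x))" for n
        using hnorm_triangle[of "Zs n (Zs n x - Z x)" "Zs n (Z x) - Z (Z x)"] K[of n "Zs n x - Z x"]
          bounded_op_diff[OF poly_op_bounded_op[OF Y]] unfolding Zs_def by simp
      show "(\<lambda>n. K * hnorm (Zs n x - Z x) + hnorm (Zs n (Z x) - Z (Z x))) \<longlonglongrightarrow> 0"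
        using tendsto_add[OF tendsto_mult_right_zero lim[of "Z x", unfolded hlim_def]]
          lim[of x, unfolded hlim_def] by simp
    qed
    moreover have "Zs (Suc n) x + Zs (Suc n) x = Y x + Zs n (Zs n x)" for n
      using Y by (simp add: Zs_def poly_op_smult poly_op_add poly_op_X poly_op_mult scaleC_half_add_half)
    ultimately have "hlim (\<lambda>n. Zs (Suc n) x + Zs (Suc n) x) (Y x + Z (Z x))"
      by (simp add: hlim_add hlim_const)
    moreover have "hlim (\<lambda>n. Zs (Suc n) x + Zs (Suc n) x) (Z x + Z x)"
      by (intro hlim_add hlim_Suc lim)
    ultimately show ?thesis by (rule hlim_unique[rotated])
  qed
  ultimately show ?thesis using that \<open>Z \<in> M\<close> \<open>hermitian Z\<close> by blast
qed

lemma positive_contraction_sqrt: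
  assumes "W \<in> M" "positive_op W" and le: "\<And>x. Re (cinner x (W x)) \<le> (hnorm x)\<^sup>2"
  obtains S where "S \<in> M" "positive_op S" "\<And>x. S (S x) = W x"
proof -
  define Y where "Y x = x - W x" for x
  have "Y \<in> M" unfolding Y_def by (intro diff_mem id_mem assms(1))
  moreover have "positive_op Y" and "Re (cinner x (Y x)) \<le> (hnorm x)\<^sup>2" for x
    using assms(2) le unfolding Y_def positive_op_def
    by (auto intro: hermitian_diff hermitian_id simp: cinner_diff_right hnorm_sq)
  ultimately obtain Z where "Z \<in> M" "hermitian Z" and Z_le: "\<And>x. Re (cinner x (Z x)) \<le> (hnorm x)\<^sup>2"
    and Z_eq: "\<And>x. Z x + Z x = Y x + Z (Z x)"
    by (rule sqrt_iter_limit) blast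
  define S where "S x = x - Z x" for x
  have "S \<in> M" unfolding S_def by (intro diff_mem id_mem \<open>Z \<in> M\<close>)
  moreover have "positive_op S"
    using \<open>hermitian Z\<close> Z_le unfolding S_def positive_op_def
    by (auto intro: hermitian_diff hermitian_id simp: cinner_diff_right hnorm_sq)
  moreover have "S (S x) = W x" for x
  proof -
    have "S (S x) = x - (Z x + Z x) + Z (Z x)"
      unfolding S_def by (simp add: bounded_op_diff[OF bounded_op_of_mem[OF \<open>Z \<in> M\<close>]])
    then show ?thesis unfolding Z_eq Y_def by simp
  qed
  ultimately show ?thesis by (rule that)
qed

lemma positive_sqrt:
  assumes "W \<in> M" "positive_op W"
  obtains S where "S \<in> M" "positive_op S" "\<And>x. S (S x) = W x"
proof -
  obtain K where K: "K > 0" "\<And>x. Re (cinner x (W x)) \<le> K * (hnorm x)\<^sup>2"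
    using bounded_op_form_le[OF bounded_op_of_mem[OF assms(1)]] by blast
  define W' where "W' x = complex_of_real (1/K) *\<^sub>C W x" for x
  have "W' \<in> M" unfolding W'_def by (rule scaleC_mem[OF assms(1)])
  moreover have "positive_op W'"
    unfolding W'_def by (rule positive_op_real_scaleC[OF assms(2)]) (use K in simp)
  moreover have "Re (cinner x (W' x)) \<le> (hnorm x)\<^sup>2" for x
    unfolding W'_def Re_cinner_real_scaleC using K(1) K(2)[of x] by (simp add: field_simps)
  ultimately obtain S' where S': "S' \<in> M" "positive_op S'" "\<And>x. S' (S' x) = W' x"
    using positive_contraction_sqrt by blast
  define S where "S x = complex_of_real (sqrt K) *\<^sub>C S' x" for x
  have "S \<in> M" unfolding S_def by (rule scaleC_mem[OF S'(1)])
  moreover have "positive_op S" unfolding S_def by (rule positive_op_real_scaleC[OF S'(2)]) (use K in simp)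
  moreover have "S (S x) = W x" for x
    unfolding S_def using K(1)
    by (simp add: bounded_opD[OF bounded_op_of_mem[OF S'(1)]] scaleC_scaleC scaleC_one S'(3) W'_def
        flip: of_real_mult)
  ultimately show ?thesis by (rule that)
qed

lemma positive_op_comp:
  assumes "A \<in> M" "B \<in> M" "positive_op A" "positive_op B"
  shows "positive_op (\<lambda>x. A (B x))"
proof -
  obtain S where S: "S \<in> M" "positive_op S" "\<And>x. S (S x) = A x" by (rule positive_sqrt[OF assms(1,3)]) blast
  text \<open>\<open>\<langle>x, A B x\<rangle> = \<langle>S x, B (S x)\<rangle>\<close> because \<open>S\<close> commutes with \<open>B\<close>.\<close>
  have "cinner x (A (B x)) = cinner (S x) (B (S x))" for x
    using S(2,3) commute[OF S(1) assms(2)] unfolding positive_op_def hermitian_def by metis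
  moreover have "hermitian (\<lambda>x. A (B x))"
    using assms(3,4) commute[OF assms(1,2)] hermitian_comp unfolding positive_op_def by blast
  ultimately show ?thesis using assms(4) unfolding positive_op_def by simp
qed

end

section \<open>Kernel projections and positive parts\<close>

lemma positive_op_funpow: "positive_op Y \<Longrightarrow> positive_op (Y ^^ k)"
  using hermitian_funpow Re_cinner_funpow_nonneg unfolding positive_op_def by blast

lemma strong_limit_powers_fixes_fixed_points:
  assumes "\<And>x. hlim (\<lambda>n. (U ^^ n) x) (E x)" "U x = x"
  shows "E x = x"
proof -
  have "(U ^^ n) x = x" for n by (induction n) (simp_all add: assms(2))
  then have "hlim (\<lambda>n. x) (E x)" using assms(1)[of x] by simp
  then show ?thesis using hlim_const by (rule hlim_unique)
qed

lemma strong_limit_powers_range_fixed: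
  assumes "bounded_op U" "\<And>x. hlim (\<lambda>n. (U ^^ n) x) (E x)"
  shows "U (E x) = E x"
proof -
  have "hlim (\<lambda>n. (U ^^ Suc n) x) (U (E x))" using hlim_bounded_op[OF assms(1) assms(2)[of x]] by simp
  then show ?thesis using hlim_Suc[OF assms(2)[of x]] by (rule hlim_unique)
qed

lemma strong_limit_powers_absorb:
  assumes "bounded_op X" "\<And>x. X (U x) = X x" "\<And>x. hlim (\<lambda>n. (U ^^ n) x) (E x)"
  shows "X (E x) = X x"
proof -
  have "X ((U ^^ n) x) = X x" for n by (induction n) (simp_all add: assms(2))
  then have "hlim (\<lambda>n. X x) (X (E x))" using hlim_bounded_op[OF assms(1) assms(3)[of x]] by simp
  then show ?thesis using hlim_const by (rule hlim_unique)
qed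

context abelian_vna
begin

lemma powers_strong_limit_mem:
  assumes "U \<in> M" "positive_op U" "positive_op (\<lambda>x. x - U x)"
  obtains E where "E \<in> M" "hermitian E" "\<And>x. hlim (\<lambda>n. (U ^^ n) x) (E x)"
proof -
  text \<open>The powers of \<open>U\<close> decrease, so their negatives increase and are bounded by \<open>0\<close>.\<close>
  define X where "X n x = (- 1) *\<^sub>C (U ^^ n) x" for n x
  have "X n \<in> M" for n unfolding X_def by (intro scaleC_mem funpow_mem assms(1))
  moreover have "hermitian (X n)" for n
    using hermitian_real_scaleC[of "U ^^ n" "- 1"] positive_op_funpow[OF assms(2)]
    unfolding X_def positive_op_def by simp
  moreover have "Re (cinner x (X n x)) \<le> Re (cinner x (X (Suc n) x))" for n x
  proof -
    have "positive_op (\<lambda>x. (U ^^ n) x - U ((U ^^ n) x))"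
      using positive_op_comp[OF diff_mem[OF id_mem assms(1)] funpow_mem[OF assms(1)]
          assms(3) positive_op_funpow[OF assms(2)]] by simp
    then show ?thesis unfolding X_def positive_op_def by (simp add: cinner_diff_right cinner_scaleC_right)
  qed
  moreover have "Re (cinner x (X n x)) \<le> 0 * (hnorm x)\<^sup>2" for n x
    using positive_op_funpow[OF assms(2)] unfolding X_def positive_op_def
    by (simp add: cinner_scaleC_right)
  ultimately obtain L where "L \<in> M" "hermitian L" "\<And>x. hlim (\<lambda>n. X n x) (L x)"
    by (rule increasing_seq_strong_limit_mem) blast
  then have "(\<lambda>x. (- 1) *\<^sub>C L x) \<in> M" "hermitian (\<lambda>x. (- 1) *\<^sub>C L x)"
    and "hlim (\<lambda>n. (U ^^ n) x) ((- 1) *\<^sub>C L x)" for x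
    using hlim_scaleC[of "\<lambda>n. X n x" "L x" "- 1"] hermitian_real_scaleC[of L "- 1"]
    by (auto intro: scaleC_mem simp: X_def scaleC_scaleC scaleC_one)
  then show ?thesis by (rule that)
qed

lemma contraction_kernel_projection:
  assumes "D \<in> M" "positive_op D" and le: "\<And>x. Re (cinner x (D x)) \<le> (hnorm x)\<^sup>2"
  obtains E where "E \<in> M" "hermitian E" "\<And>x. E (E x) = E x" "\<And>x. D (E x) = 0"
    and "\<And>x. D x = 0 \<Longrightarrow> E x = x"
    and "\<And>X x. X \<in> M \<Longrightarrow> (\<And>x. X (D x) = 0) \<Longrightarrow> X (E x) = X x"
proof -
  text \<open>\<open>E\<close> is the strong limit of the powers of \<open>U = I - D\<close>, whose fixed points form \<open>ker D\<close>.\<close>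
  define U where "U x = x - D x" for x
  have "U \<in> M" unfolding U_def by (intro diff_mem id_mem assms(1))
  moreover have "positive_op U"
    using assms(2) le unfolding U_def positive_op_def
    by (auto intro: hermitian_diff hermitian_id simp: cinner_diff_right hnorm_sq)
  moreover have "positive_op (\<lambda>x. x - U x)" using assms(2) by (simp add: U_def)
  ultimately obtain E where "E \<in> M" "hermitian E" and lim: "\<And>x. hlim (\<lambda>n. (U ^^ n) x) (E x)"
    by (rule powers_strong_limit_mem) blast
  have U: "bounded_op U" by (rule bounded_op_of_mem[OF \<open>U \<in> M\<close>])
  have UE: "U (E x) = E x" for x by (rule strong_limit_powers_range_fixed[OF U lim])
  then have "D (E x) = 0" for x by (simp add: U_def)
  moreover have "E (E x) = E x" for x by (rule strong_limit_powers_fixes_fixed_points[OF lim UE])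
  moreover have "E x = x" if "D x = 0" for x
    by (rule strong_limit_powers_fixes_fixed_points[OF lim]) (simp add: U_def that)
  moreover have "X (E x) = X x" if "X \<in> M" "\<And>x. X (D x) = 0" for X x
  proof (rule strong_limit_powers_absorb[OF bounded_op_of_mem[OF \<open>X \<in> M\<close>] _ lim])
    show "X (U x) = X x" for x
      using that by (simp add: U_def bounded_op_diff bounded_op_of_mem)
  qed
  ultimately show ?thesis using that \<open>E \<in> M\<close> \<open>hermitian E\<close> by blast
qed

lemma kernel_projection:
  assumes "Y \<in> M" "hermitian Y"
  obtains E where "E \<in> M" "hermitian E" "\<And>x. E (E x) = E x" "\<And>x. Y (E x) = 0"
    and "\<And>x. Y x = 0 \<Longrightarrow> E x = x"
    and "\<And>X x. X \<in> M \<Longrightarrow> (\<And>x. X (Y x) = 0) \<Longrightarrow> X (E x) = X x"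
proof -
  have Y: "bounded_op Y" by (rule bounded_op_of_mem[OF assms(1)])
  obtain K where K: "K > 0" "\<And>x. hnorm (Y x) \<le> K * hnorm x" using bounded_op_bound[OF Y] by blast
  have YY: "cinner x (Y (Y x)) = complex_of_real ((hnorm (Y x))\<^sup>2)" for x
  proof -
    have "cinner (Y x) (Y x) = cinner x (Y (Y x))" using assms(2) unfolding hermitian_def by blast
    then show ?thesis using cinner_self_hnorm[of "Y x"] by (rule trans[OF sym])
  qed
  text \<open>\<open>D = Y\<^sup>2/K\<^sup>2\<close> satisfies \<open>0 \<le> D \<le> I\<close> and has the same kernel as \<open>Y\<close>.\<close>
  define D where "D x = complex_of_real (1 / K\<^sup>2) *\<^sub>C Y (Y x)" for x
  have "D \<in> M" unfolding D_def by (rule scaleC_mem[OF comp_mem[OF assms(1) assms(1)]])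
  have "positive_op (\<lambda>x. Y (Y x))"
    unfolding positive_op_def using hermitian_comp[OF assms(2) assms(2)] YY by simp
  then have "positive_op D" unfolding D_def by (rule positive_op_real_scaleC) simp
  have "Re (cinner x (D x)) \<le> (hnorm x)\<^sup>2" for x
  proof -
    have "Re (cinner x (D x)) = (hnorm (Y x))\<^sup>2 / K\<^sup>2"
      unfolding D_def Re_cinner_real_scaleC YY by simp
    moreover have "(hnorm (Y x))\<^sup>2 \<le> K\<^sup>2 * (hnorm x)\<^sup>2"
      using power_mono[OF K(2)[of x] hnorm_nonneg, of 2] by (simp add: power_mult_distrib)
    ultimately have "Re (cinner x (D x)) \<le> K\<^sup>2 * (hnorm x)\<^sup>2 / K\<^sup>2"
      by (metis divide_right_mono zero_le_power2)
    then show ?thesis using K(1) by simp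
  qed
  then obtain E where "E \<in> M" "hermitian E" "\<And>x. E (E x) = E x" and DE: "\<And>x. D (E x) = 0"
    and ker: "\<And>x. D x = 0 \<Longrightarrow> E x = x"
    and absorb: "\<And>X x. X \<in> M \<Longrightarrow> (\<And>x. X (D x) = 0) \<Longrightarrow> X (E x) = X x"
    by (rule contraction_kernel_projection[OF \<open>D \<in> M\<close> \<open>positive_op D\<close>]) blast
  have "Y (E x) = 0" for x using DE[of x] YY[of "E x"] K(1) by (simp add: D_def)
  moreover have "E x = x" if "Y x = 0" for x by (rule ker) (simp add: D_def that bounded_op_zero[OF Y])
  moreover have "X (E x) = X x" if "X \<in> M" "\<And>x. X (Y x) = 0" for X x
    by (rule absorb[OF \<open>X \<in> M\<close>]) (simp add: D_def that bounded_opD bounded_op_of_mem)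
  ultimately show ?thesis using that \<open>E \<in> M\<close> \<open>hermitian E\<close> \<open>\<And>x. E (E x) = E x\<close> by blast
qed

lemma positive_op_of_annihilating_split:
  assumes "W \<in> M" "positive_op W" "T \<in> M" "T' \<in> M" "hermitian T" "hermitian T'"
    and annihilate: "\<And>x. T (T' x) = 0" and split: "\<And>x. T x + T' x = W x + W x"
  shows "positive_op T"
proof -
  obtain E where "E \<in> M" "hermitian E" "\<And>x. E (E x) = E x" and T'E: "\<And>x. T' (E x) = 0"
    and absorb: "\<And>X x. X \<in> M \<Longrightarrow> (\<And>x. X (T' x) = 0) \<Longrightarrow> X (E x) = X x"
    by (rule kernel_projection[OF assms(4,6)]) blast
  text \<open>\<open>T\<close> only sees the range of \<open>E = ker T'\<close>, where it agrees with \<open>2 W\<close>.\<close>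
  have "T x = W (E x) + W (E x)" for x
    using absorb[OF assms(3) annihilate, of x] split[of "E x"] T'E[of x] by simp
  moreover have "positive_op (\<lambda>x. W (E x))"
    by (rule positive_op_comp[OF assms(1) \<open>E \<in> M\<close> assms(2) positive_op_idempotent]) fact+
  ultimately show ?thesis
    using assms(5) unfolding positive_op_def by (simp add: cinner_add_right)
qed

lemma positive_negative_parts:
  assumes "B \<in> M" "hermitian B"
  obtains P N where "P \<in> M" "N \<in> M" "positive_op P" "positive_op N"
    and "\<And>x. B x = P x - N x" "\<And>x. P (N x) = 0" "\<And>x. N (P x) = 0"
proof -
  have B: "bounded_op B" by (rule bounded_op_of_mem[OF assms(1)])
  have "positive_op (\<lambda>x. B (B x))"
    using hermitian_comp[OF assms(2) assms(2)] assms(2)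
    unfolding positive_op_def hermitian_def by (metis cinner_self_nonneg)
  then obtain W where "W \<in> M" "positive_op W" and WW: "\<And>x. W (W x) = B (B x)"
    using positive_sqrt[OF comp_mem[OF assms(1) assms(1)]] by blast
  have W: "bounded_op W" by (rule bounded_op_of_mem[OF \<open>W \<in> M\<close>])
  text \<open>With \<open>W = |B|\<close>, the operators \<open>W + B\<close> and \<open>W - B\<close> annihilate each other.\<close>
  define Pos where "Pos x = W x + B x" for x
  define Neg where "Neg x = W x - B x" for x
  have mem: "Pos \<in> M" "Neg \<in> M" unfolding Pos_def Neg_def by (simp_all add: add_mem diff_mem \<open>W \<in> M\<close> assms(1))
  have herm: "hermitian Pos" "hermitian Neg"
    using \<open>positive_op W\<close> assms(2) unfolding Pos_def Neg_def positive_op_def hermitian_def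
    by (simp_all add: cinner_add_left cinner_add_right cinner_diff_left cinner_diff_right)
  have PN: "Pos (Neg x) = 0" and NP: "Neg (Pos x) = 0" for x
    unfolding Pos_def Neg_def
    by (simp_all add: bounded_op_diff[OF W] bounded_op_diff[OF B] bounded_opD[OF W] bounded_opD[OF B]
        WW commute[OF \<open>W \<in> M\<close> assms(1)])
  have "positive_op Pos"
    by (rule positive_op_of_annihilating_split[OF \<open>W \<in> M\<close> \<open>positive_op W\<close> mem herm PN])
      (simp add: Pos_def Neg_def)
  moreover have "positive_op Neg"
    by (rule positive_op_of_annihilating_split[OF \<open>W \<in> M\<close> \<open>positive_op W\<close> mem(2,1) herm(2,1) NP])
      (simp add: Pos_def Neg_def)
  ultimately have "positive_op (\<lambda>x. complex_of_real (1/2) *\<^sub>C Pos x)"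
    "positive_op (\<lambda>x. complex_of_real (1/2) *\<^sub>C Neg x)"
    using positive_op_real_scaleC[of _ "1/2"] by auto
  moreover have "B x = complex_of_real (1/2) *\<^sub>C Pos x - complex_of_real (1/2) *\<^sub>C Neg x" for x
    unfolding Pos_def Neg_def by (simp add: scaleC_diff_right scaleC_add_right scaleC_half_add_half)
  moreover have "complex_of_real (1/2) *\<^sub>C Pos (complex_of_real (1/2) *\<^sub>C Neg x) = 0"
    "complex_of_real (1/2) *\<^sub>C Neg (complex_of_real (1/2) *\<^sub>C Pos x) = 0" for x
    by (simp_all add: bounded_opD bounded_op_of_mem mem PN NP)
  ultimately show ?thesis using that scaleC_mem[OF mem(1)] scaleC_mem[OF mem(2)] by blast
qed

section \<open>Spectral projections\<close>

lemma projections_iff: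
  "Q \<in> projections M \<longleftrightarrow> Q \<in> M \<and> (\<forall>x. Q (Q x) = Q x) \<and> hermitian Q"
  using adj_eq_self_iff_hermitian[OF bounded_op_of_mem]
  by (auto simp: projections_def fun_eq_iff)

lemma projection_le_kernel_projection:
  assumes "P \<in> M" "N \<in> M" "positive_op P" and B: "\<And>x. B x = P x - N x" and PN: "\<And>x. P (N x) = 0"
    and E: "E \<in> M" "positive_op E" "\<And>x. P x = 0 \<Longrightarrow> E x = x"
    and Q: "Q \<in> projections M" "positive_op (\<lambda>x. - B (Q x))"
  shows "positive_op (\<lambda>x. E x - Q x)"
proof -
  have "Q \<in> M" and QQ: "\<And>x. Q (Q x) = Q x" and "hermitian Q" using Q(1) by (auto simp: projections_iff)
  have P: "bounded_op P" by (rule bounded_op_of_mem[OF \<open>P \<in> M\<close>])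
  have "B = (\<lambda>x. P x - N x)" by (rule ext) (rule B)
  then have "B \<in> M" using diff_mem[OF \<open>P \<in> M\<close> \<open>N \<in> M\<close>] by simp
  text \<open>\<open>\<parallel>Q P x\<parallel>\<^sup>2 = \<langle>x, P Q P x\<rangle> = -\<langle>x, P (-B Q) x\<rangle> \<le> 0\<close>, since \<open>P\<^sup>2 = P B\<close>.\<close>
  have "Q (P x) = 0" for x
  proof -
    have "P (Q (P x)) = Q (P (P x))" by (rule commute[OF \<open>P \<in> M\<close> \<open>Q \<in> M\<close>])
    also have "P (P x) = P (B x)" using PN[of x] by (simp add: B bounded_op_diff[OF P])
    also have "Q (P (B x)) = P (Q (B x))" by (rule commute[OF \<open>Q \<in> M\<close> \<open>P \<in> M\<close>])
    also have "\<dots> = - P (- B (Q x))"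
      using commute[OF \<open>Q \<in> M\<close> \<open>B \<in> M\<close>] by (simp add: bounded_op_minus[OF P])
    finally have "P (Q (P x)) = - P (- B (Q x))" .
    moreover have "cinner x (P (Q (P x))) = cinner (Q (P x)) (Q (P x))"
      using \<open>positive_op P\<close> \<open>hermitian Q\<close> QQ unfolding positive_op_def hermitian_def by metis
    ultimately have "cinner (Q (P x)) (Q (P x)) = - cinner x (P (- B (Q x)))"
      by (simp add: cinner_minus_right)
    moreover have "0 \<le> Re (cinner x (P (- B (Q x))))"
      using positive_op_comp[OF \<open>P \<in> M\<close> _ \<open>positive_op P\<close> Q(2)] \<open>Q \<in> M\<close> \<open>B \<in> M\<close>
      unfolding positive_op_def by (simp add: comp_mem scaleC_mem scaleC_minus_one[symmetric])
    ultimately have "(hnorm (Q (P x)))\<^sup>2 \<le> 0" unfolding hnorm_sq by simp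
    then show ?thesis by simp
  qed
  then have "E (Q x) = Q x" for x using E(3) commute[OF \<open>P \<in> M\<close> \<open>Q \<in> M\<close>] by metis
  then have "E x - Q x = E (x - Q x)" for x by (simp add: bounded_op_diff bounded_op_of_mem E(1))
  moreover have "positive_op (\<lambda>x. E (x - Q x))"
    using positive_op_comp[OF E(1) diff_mem[OF id_mem \<open>Q \<in> M\<close>] E(2)]
      positive_op_idempotent[OF hermitian_diff[OF hermitian_id \<open>hermitian Q\<close>]]
    by (simp add: bounded_op_diff bounded_op_of_mem \<open>Q \<in> M\<close> QQ)
  ultimately show ?thesis by simp
qed

lemma spectral_proj_eqI:
  fixes l :: real
  assumes "A \<in> M" "E \<in> projections M"
  defines "B \<equiv> \<lambda>x. A x - complex_of_real l *\<^sub>C x"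
  assumes "positive_op (\<lambda>x. - B (E x))"
    and "\<And>Q. Q \<in> projections M \<Longrightarrow> positive_op (\<lambda>x. - B (Q x)) \<Longrightarrow> positive_op (\<lambda>x. E x - Q x)"
  shows "spectral_proj M A l = E"
proof -
  have le_iff: "op_le (A \<circ> Q) (\<lambda>x. complex_of_real l *\<^sub>C Q x) \<longleftrightarrow> positive_op (\<lambda>x. - B (Q x))"
    if "Q \<in> M" for Q
    using op_le_iff_positive_op[OF bounded_op_of_mem[OF comp_mem'[OF assms(1) that]]
        bounded_op_scaleC[OF bounded_op_of_mem[OF that]]]
    by (simp add: B_def)
  have "op_le Q E" if "Q \<in> projections M" "op_le (A \<circ> Q) (\<lambda>x. complex_of_real l *\<^sub>C Q x)" for Q
  proof -
    have "Q \<in> M" using that(1) by (simp add: projections_iff)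
    then have "positive_op (\<lambda>x. E x - Q x)" using assms(5)[OF that(1)] le_iff that(2) by blast
    then show ?thesis
      using op_le_iff_positive_op[OF bounded_op_of_mem[OF \<open>Q \<in> M\<close>]] assms(2)
      by (simp add: projections_iff bounded_op_of_mem)
  qed
  moreover have "op_le (A \<circ> E) (\<lambda>x. complex_of_real l *\<^sub>C E x)"
    using le_iff assms(2,4) by (simp add: projections_iff)
  ultimately show ?thesis
    unfolding spectral_proj_def
    using assms(2) op_le_antisym[OF bounded_op_of_mem bounded_op_of_mem]
    by (intro the_equality) (auto simp: projections_iff)
qed

lemma spectral_proj_props:
  fixes l :: real
  assumes "A \<in> M" "hermitian A"
  defines "B \<equiv> \<lambda>x. A x - complex_of_real l *\<^sub>C x" and "E \<equiv> spectral_proj M A l"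
  shows "E \<in> projections M" "positive_op (\<lambda>x. - B (E x))" "positive_op (\<lambda>x. B x - B (E x))"
proof -
  have "B \<in> M" unfolding B_def by (intro diff_mem assms(1) scaleC_mem id_mem)
  moreover have "hermitian B"
    unfolding B_def by (rule hermitian_diff[OF assms(2) hermitian_real_scaleC[OF hermitian_id]])
  ultimately obtain P N where "P \<in> M" "N \<in> M" "positive_op P" "positive_op N"
    and B: "\<And>x. B x = P x - N x" and PN: "\<And>x. P (N x) = 0" and NP: "\<And>x. N (P x) = 0"
    by (rule positive_negative_parts) blast
  obtain E' where "E' \<in> M" "hermitian E'" "\<And>x. E' (E' x) = E' x" and PE': "\<And>x. P (E' x) = 0"
    and ker: "\<And>x. P x = 0 \<Longrightarrow> E' x = x"
    and absorb: "\<And>X x. X \<in> M \<Longrightarrow> (\<And>x. X (P x) = 0) \<Longrightarrow> X (E' x) = X x"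
    using kernel_projection[OF \<open>P \<in> M\<close>] \<open>positive_op P\<close> unfolding positive_op_def by metis
  have E': "E' \<in> projections M" "positive_op E'"
    using \<open>E' \<in> M\<close> \<open>hermitian E'\<close> \<open>\<And>x. E' (E' x) = E' x\<close>
    by (auto simp: projections_iff intro: positive_op_idempotent)
  have "- B (E' x) = N (E' x)" for x by (simp add: B PE')
  then have E'_le: "positive_op (\<lambda>x. - B (E' x))"
    using positive_op_comp[OF \<open>N \<in> M\<close> \<open>E' \<in> M\<close> \<open>positive_op N\<close> E'(2)] by simp
  have "E = E'"
    unfolding E_def
    by (rule spectral_proj_eqI[OF assms(1) E'(1)])
      (use E'_le projection_le_kernel_projection[OF \<open>P \<in> M\<close> \<open>N \<in> M\<close> \<open>positive_op P\<close> B PN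
          \<open>E' \<in> M\<close> E'(2) ker] in \<open>simp_all add: B_def\<close>)
  moreover have "B x - B (E' x) = P x" for x
    using absorb[OF \<open>N \<in> M\<close> NP] PE' by (simp add: B)
  ultimately show "E \<in> projections M" "positive_op (\<lambda>x. - B (E x))" "positive_op (\<lambda>x. B x - B (E x))"
    using E' E'_le \<open>positive_op P\<close> by simp_all
qed

end

section \<open>Characters\<close>

locale gelfand_character = abelian_vna M for M :: "('h::complex_hilbert \<Rightarrow> 'h) set" +
  fixes \<tau> :: "('h \<Rightarrow> 'h) \<Rightarrow> complex"
  assumes character: "\<tau> \<in> gelfand_spectrum M"
begin

lemma character_add: "X \<in> M \<Longrightarrow> Y \<in> M \<Longrightarrow> \<tau> (\<lambda>x. X x + Y x) = \<tau> X + \<tau> Y"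
  using character unfolding gelfand_spectrum_def by blast

lemma character_scaleC: "X \<in> M \<Longrightarrow> \<tau> (\<lambda>x. a *\<^sub>C X x) = a * \<tau> X"
  using character unfolding gelfand_spectrum_def by blast

lemma character_comp: "X \<in> M \<Longrightarrow> Y \<in> M \<Longrightarrow> \<tau> (\<lambda>x. X (Y x)) = \<tau> X * \<tau> Y"
  using character unfolding gelfand_spectrum_def by (simp add: o_def)

lemma character_diff: "X \<in> M \<Longrightarrow> Y \<in> M \<Longrightarrow> \<tau> (\<lambda>x. X x - Y x) = \<tau> X - \<tau> Y"
  using character_add[of X "\<lambda>x. (- 1) *\<^sub>C Y x"] character_scaleC[of Y "- 1"] scaleC_mem[of Y "- 1"]
  by (simp add: scaleC_minus_one)

lemma character_nonneg: "X \<in> M \<Longrightarrow> positive_op X \<Longrightarrow> \<tau> X \<in> \<real> \<and> 0 \<le> Re (\<tau> X)"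
  using character op_le_zero_iff_positive_op[OF bounded_op_of_mem] unfolding gelfand_spectrum_def by blast

lemma character_id: "\<tau> (\<lambda>x. x) = 1"
proof -
  obtain X where "X \<in> M" "\<tau> X \<noteq> 0" using character unfolding gelfand_spectrum_def by blast
  moreover have "\<tau> X * 1 = \<tau> X * \<tau> (\<lambda>x. x)"
    using character_comp[OF \<open>X \<in> M\<close> id_mem] by simp
  ultimately show ?thesis by (metis mult_left_cancel)
qed

lemma character_real: "A \<in> M \<Longrightarrow> hermitian A \<Longrightarrow> \<tau> A = complex_of_real (Re (\<tau> A))"
proof -
  assume "A \<in> M" "hermitian A"
  then obtain P N where "P \<in> M" "N \<in> M" "positive_op P" "positive_op N" "\<And>x. A x = P x - N x"
    by (rule positive_negative_parts) blast
  then have "\<tau> A = \<tau> P - \<tau> N" using character_diff[of P N] by (metis ext)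
  then show ?thesis
    using character_nonneg[OF \<open>P \<in> M\<close> \<open>positive_op P\<close>] character_nonneg[OF \<open>N \<in> M\<close> \<open>positive_op N\<close>]
    by (auto simp: complex_is_Real_iff complex_eq_iff)
qed

lemma character_projection: "E \<in> projections M \<Longrightarrow> \<tau> E = 0 \<or> \<tau> E = 1"
  using character_comp[of E E] by (auto simp: projections_iff)

lemma character_spectral_proj_nonneg:
  fixes l :: real
  assumes "A \<in> M" "hermitian A"
  defines "E \<equiv> spectral_proj M A l"
  shows "0 \<le> Re (- (\<tau> A - l) * \<tau> E)" "0 \<le> Re ((\<tau> A - l) * (1 - \<tau> E))"
proof -
  define B where "B x = A x - complex_of_real l *\<^sub>C x" for x
  have "E \<in> M" using spectral_proj_props(1)[OF assms(1,2)] by (simp add: E_def projections_iff)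
  have "B \<in> M" unfolding B_def by (intro diff_mem assms(1) scaleC_mem id_mem)
  have BE: "(\<lambda>x. B (E x)) \<in> M" by (rule comp_mem[OF \<open>B \<in> M\<close> \<open>E \<in> M\<close>])
  have "\<tau> B = \<tau> A - \<tau> (\<lambda>x. complex_of_real l *\<^sub>C x)"
    unfolding B_def by (rule character_diff[OF assms(1) scaleC_mem[OF id_mem]])
  then have \<tau>B: "\<tau> B = \<tau> A - l" using character_scaleC[OF id_mem] character_id by simp
  have "\<tau> (\<lambda>x. (- 1) *\<^sub>C B (E x)) = - 1 * \<tau> (\<lambda>x. B (E x))" by (rule character_scaleC[OF BE])
  also have "\<dots> = - (\<tau> A - l) * \<tau> E"
    using character_comp[OF \<open>B \<in> M\<close> \<open>E \<in> M\<close>] \<tau>B by (simp add: algebra_simps)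
  finally have "\<tau> (\<lambda>x. (- 1) *\<^sub>C B (E x)) = - (\<tau> A - l) * \<tau> E" .
  moreover have "positive_op (\<lambda>x. (- 1) *\<^sub>C B (E x))"
    using spectral_proj_props(2)[OF assms(1,2), of l] unfolding B_def E_def by (simp add: scaleC_minus_one)
  ultimately show "0 \<le> Re (- (\<tau> A - l) * \<tau> E)"
    using character_nonneg[OF scaleC_mem[OF BE]] by metis
  have "\<tau> (\<lambda>x. B x - B (E x)) = (\<tau> A - l) * (1 - \<tau> E)"
    using character_diff[OF \<open>B \<in> M\<close> BE] character_comp[OF \<open>B \<in> M\<close> \<open>E \<in> M\<close>] \<tau>B
    by (simp add: algebra_simps)
  moreover have "positive_op (\<lambda>x. B x - B (E x))"
    using spectral_proj_props(3)[OF assms(1,2), of l] unfolding B_def E_def by simp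
  ultimately show "0 \<le> Re ((\<tau> A - l) * (1 - \<tau> E))"
    using character_nonneg[OF diff_mem[OF \<open>B \<in> M\<close> BE]] by metis
qed

lemma character_le_if_spectral_proj:
  assumes "A \<in> M" "hermitian A" "\<tau> (spectral_proj M A l) = 1"
  shows "Re (\<tau> A) \<le> l"
  using character_spectral_proj_nonneg(1)[OF assms(1,2), of l] assms(3) by simp

lemma spectral_proj_if_character_less:
  assumes "A \<in> M" "hermitian A" "Re (\<tau> A) < l"
  shows "\<tau> (spectral_proj M A l) = 1"
proof (rule ccontr)
  assume "\<tau> (spectral_proj M A l) \<noteq> 1"
  then have "\<tau> (spectral_proj M A l) = 0"
    using character_projection spectral_proj_props(1)[OF assms(1,2)] by blast
  then show False using character_spectral_proj_nonneg(2)[OF assms(1,2), of l] assms(3) by simp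
qed

end

lemma Inf_eq_if_between:
  fixes a :: real
  assumes upper: "\<And>l. a < l \<Longrightarrow> l \<in> S" and lower: "\<And>l. l \<in> S \<Longrightarrow> a \<le> l"
  shows "Inf S = a"
proof (rule antisym)
  have "bdd_below S" using lower by (rule bdd_belowI)
  show "Inf S \<le> a"
  proof (rule field_le_epsilon)
    fix e :: real assume "0 < e"
    then show "Inf S \<le> a + e" using upper[of "a + e"] \<open>bdd_below S\<close> by (simp add: cInf_lower)
  qed
  show "a \<le> Inf S" using upper[of "a + 1"] lower by (auto intro: cInf_greatest)
qed

theorem theorem2p6:
  fixes M :: "('h::complex_hilbert \<Rightarrow> 'h) set"
  assumes "von_neumann_algebra M" and "abelian M"
    and "A \<in> self_adjoints M" and "\<tau> \<in> gelfand_spectrum M"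
  shows "complex_of_real (obs_fun M A (beta M \<tau>)) = \<tau> A"
proof -
  interpret gelfand_character M \<tau> by unfold_locales (use assms in auto)
  have "A \<in> M" and "hermitian A"
    using assms(3) adj_eq_self_iff_hermitian[OF bounded_op_of_mem] by (auto simp: self_adjoints_def)
  have "spectral_proj M A l \<in> beta M \<tau> \<longleftrightarrow> \<tau> (spectral_proj M A l) = 1" for l
    using spectral_proj_props(1)[OF \<open>A \<in> M\<close> \<open>hermitian A\<close>] by (simp add: beta_def)
  then have "obs_fun M A (beta M \<tau>) = Re (\<tau> A)"
    unfolding obs_fun_def
    by (intro Inf_eq_if_between)
      (simp_all add: spectral_proj_if_character_less character_le_if_spectral_proj \<open>A \<in> M\<close> \<open>hermitian A\<close>)
  then show ?thesis using character_real[OF \<open>A \<in> M\<close> \<open>hermitian A\<close>] by simp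
qed

end
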